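(* Let $p\ne2$ be a real number and let $F\subset\mathrm{Sym}^2(\mathbb{R}^n)$ be a cone subequation. Let $g:S^{n-1}\to[-\infty,\infty)$ and $u:\mathbb{R}^n\setminus\{0\}\to[-\infty,\infty)$ be upper semicontinuous functions related by $u(x)=\frac{1}{|x|^{p-2}}g\big(\frac{x}{|x|}\big)$. Then: $u$ is $F$-subharmonic on $\mathbb{R}^n\setminus\{0\}$ if and only if $g$ is $F_{S^{n-1}}$-subharmonic on $S^{n-1}$; and $u$ is $F$-harmonic on $\mathbb{R}^n\setminus\{0\}$ if and only if $g$ is $F_{S^{n-1}}$-subharmonic on $S^{n-1}$ and $-g$ is $(\widetilde F)_{S^{n-1}}$-subharmonic on $S^{n-1}$.
   Context: A cone subequation is a closed subset $F\subset\mathrm{Sym}^2(\mathbb{R}^n)$, $\emptyset\ne F\ne\mathrm{Sym}^2(\mathbb{R}^n)$, with $F+\{A\ge0\}\subset F$ and $tF\subset F$ for $t\ge0$. Its dual is $\widetilde F=\mathrm{Sym}^2(\mathbb{R}^n)\setminus(-\mathrm{Int}\,F)$. An upper semicontinuous $u$ on an open set is $F$-subharmonic if for each point $x$ and each $C^2$ function $\varphi$ near $x$ with $u\le\varphi$ near $x$, $u(x)=\varphi(x)$, one has $D^2\varphi(x)\in F$; $u$ is $F$-harmonic if $u$ is $F$-subharmonic and $-u$ is $\widetilde F$-subharmonic. Let $J^2(S^{n-1})$ be the Riemannian $2$-jet bundle with fibre $\mathbb{R}\times T^*_\sigma S^{n-1}\times\mathrm{Sym}^2(T^*_\sigma S^{n-1})$,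 and $J^2_\sigma\psi=(\psi(\sigma),D_\sigma\psi,\mathrm{Hess}_\sigma\psi)$. Define the bundle map $\Phi:J^2(S^{n-1})\to\mathrm{Sym}^2(\mathbb{R}^n)$ by $\Phi(r,q,H)=H-(p-2)rP_{\sigma^\perp}-(p-1)(\sigma q^t+q\sigma^t)+(p-2)(p-1)rP_\sigma$ at $\sigma$, where $q\in T_\sigma S^{n-1}\subset\mathbb{R}^n$ and $H$ is extended by zero on $\mathbb{R}\sigma$. For a subset $F$ set $F_{S^{n-1}}=\Phi^{-1}(F)\subset J^2(S^{n-1})$. An upper semicontinuous $g$ on $S^{n-1}$ is $F_{S^{n-1}}$-subharmonic if for each $\sigma$ and each $C^2$ function $\psi$ near $\sigma$ with $g\le\psi$ near $\sigma$, $g(\sigma)=\psi(\sigma)$, one has $J^2_\sigma\psi\in F_{S^{n-1}}$. *)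

theory Defs
  imports "HOL-Analysis.Analysis" "HOL-Library.Extended_Real"
begin

definition Sym2 :: "(real^'n^'n) set" where
  "Sym2 = {A. transpose A = A}"

definition psd :: "real^'n^'n \<Rightarrow> bool" where
  "psd A \<longleftrightarrow> A \<in> Sym2 \<and> (\<forall>x. 0 \<le> x \<bullet> (A *v x))"

definition sym_interior :: "(real^'n^'n) set \<Rightarrow> (real^'n^'n) set" where
  "sym_interior F = {A \<in> Sym2. \<exists>e>0. \<forall>B\<in>Sym2. dist B A < e \<longrightarrow> B \<in> F}"

definition cone_subequation :: "(real^'n^'n) set \<Rightarrow> bool" where
  "cone_subequation F \<longleftrightarrow> F \<subseteq> Sym2 \<and> closed F \<and> F \<noteq> {} \<and> F \<noteq> Sym2 \<and>
     (\<forall>A\<in>F. \<forall>P. psd P \<longrightarrow> A + P \<in> F) \<and>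
     (\<forall>A\<in>F. \<forall>t::real. t \<ge> 0 \<longrightarrow> t *\<^sub>R A \<in> F)"

definition dual_subeq :: "(real^'n^'n) set \<Rightarrow> (real^'n^'n) set" where
  "dual_subeq F = Sym2 - uminus ` (sym_interior F)"

definition usc_on :: "('a::metric_space) set \<Rightarrow> ('a \<Rightarrow> ereal) \<Rightarrow> bool" where
  "usc_on S u \<longleftrightarrow> (\<forall>x\<in>S. u x \<noteq> \<infinity>) \<and>
     (\<forall>x\<in>S. \<forall>c. u x < c \<longrightarrow> (\<exists>e>0. \<forall>y\<in>S. dist y x < e \<longrightarrow> u y < c))"

definition C2_near ::
  "(real^'n \<Rightarrow> real) \<Rightarrow> (real^'n \<Rightarrow> real^'n) \<Rightarrow> (real^'n \<Rightarrow> real^'n^'n) \<Rightarrow> real^'n \<Rightarrow> bool" where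
  "C2_near phi Dphi Hphi x \<longleftrightarrow> (\<exists>e>0.
     (\<forall>y\<in>ball x e. (phi has_derivative (\<lambda>h. Dphi y \<bullet> h)) (at y) \<and>
                    (Dphi has_derivative (\<lambda>h. Hphi y *v h)) (at y)) \<and>
     continuous_on (ball x e) Hphi)"

definition F_subharmonic :: "(real^'n^'n) set \<Rightarrow> (real^'n) set \<Rightarrow> (real^'n \<Rightarrow> ereal) \<Rightarrow> bool" where
  "F_subharmonic F \<Omega> u \<longleftrightarrow> usc_on \<Omega> u \<and>
     (\<forall>x\<in>\<Omega>. \<forall>phi Dphi Hphi. C2_near phi Dphi Hphi x \<longrightarrow>
        (\<exists>e>0. \<forall>y\<in>\<Omega>. dist y x < e \<longrightarrow> u y \<le> ereal (phi y)) \<longrightarrow>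
        u x = ereal (phi x) \<longrightarrow> Hphi x \<in> F)"

definition F_harmonic :: "(real^'n^'n) set \<Rightarrow> (real^'n) set \<Rightarrow> (real^'n \<Rightarrow> ereal) \<Rightarrow> bool" where
  "F_harmonic F \<Omega> u \<longleftrightarrow> F_subharmonic F \<Omega> u \<and> F_subharmonic (dual_subeq F) \<Omega> (\<lambda>x. - u x)"

definition outer :: "real^'n \<Rightarrow> real^'n \<Rightarrow> real^'n^'n" where
  "outer a b = (\<chi> i j. a $ i * b $ j)"

definition proj_along :: "real^'n \<Rightarrow> real^'n^'n" where
  "proj_along \<sigma> = outer \<sigma> \<sigma>"

definition proj_perp :: "real^'n \<Rightarrow> real^'n^'n" where
  "proj_perp \<sigma> = mat 1 - outer \<sigma> \<sigma>"

text \<open>Fibre of J^2(S^{n-1}) at sigma: (r, q, H), q tangent, H a symmetric form on the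
  tangent space, extended by zero on R sigma (so represented as a symmetric matrix killing sigma).\<close>
definition J2_sphere :: "((real^'n) \<times> real \<times> (real^'n) \<times> (real^'n^'n)) set" where
  "J2_sphere = {(\<sigma>, r, q, H). \<sigma> \<in> sphere 0 1 \<and> q \<bullet> \<sigma> = 0 \<and> H \<in> Sym2 \<and> H *v \<sigma> = 0}"

definition Phi :: "real \<Rightarrow> (real^'n) \<times> real \<times> (real^'n) \<times> (real^'n^'n) \<Rightarrow> real^'n^'n" where
  "Phi p = (\<lambda>(\<sigma>, r, q, H). H - ((p - 2) * r) *\<^sub>R proj_perp \<sigma>
      - (p - 1) *\<^sub>R (outer \<sigma> q + outer q \<sigma>) + ((p - 2) * (p - 1) * r) *\<^sub>R proj_along \<sigma>)"

definition F_sphere :: "real \<Rightarrow> (real^'n^'n) set \<Rightarrow> ((real^'n) \<times> real \<times> (real^'n) \<times> (real^'n^'n)) set" where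
  "F_sphere p F = {J \<in> J2_sphere. Phi p J \<in> F}"

text \<open>Riemannian 2-jet at sigma of the restriction to S^{n-1} of an ambient C^2 function phi
  (gradient Dphi, Hessian Hphi): value, tangential gradient, and the Riemannian Hessian of the
  unit sphere, P D^2phi P - (sigma . grad phi) P, P = P_{sigma perp}.\<close>
definition jet2_sphere ::
  "(real^'n \<Rightarrow> real) \<Rightarrow> (real^'n \<Rightarrow> real^'n) \<Rightarrow> (real^'n \<Rightarrow> real^'n^'n) \<Rightarrow> real^'n
     \<Rightarrow> (real^'n) \<times> real \<times> (real^'n) \<times> (real^'n^'n)" where
  "jet2_sphere phi Dphi Hphi \<sigma> =
     (\<sigma>, phi \<sigma>, proj_perp \<sigma> *v Dphi \<sigma>,
      proj_perp \<sigma> ** Hphi \<sigma> ** proj_perp \<sigma> - (\<sigma> \<bullet> Dphi \<sigma>) *\<^sub>R proj_perp \<sigma>)"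

text \<open>Subharmonicity on S^{n-1} for a subset G of J^2(S^{n-1}). C^2 test functions near sigma
  on the sphere are (locally) exactly restrictions of ambient C^2 functions near sigma.\<close>
definition sphere_subharmonic ::
  "((real^'n) \<times> real \<times> (real^'n) \<times> (real^'n^'n)) set \<Rightarrow> (real^'n \<Rightarrow> ereal) \<Rightarrow> bool" where
  "sphere_subharmonic G g \<longleftrightarrow> usc_on (sphere 0 1) g \<and>
     (\<forall>\<sigma>\<in>sphere 0 1. \<forall>phi Dphi Hphi. C2_near phi Dphi Hphi \<sigma> \<longrightarrow>
        (\<exists>e>0. \<forall>\<tau>\<in>sphere 0 1. dist \<tau> \<sigma> < e \<longrightarrow> g \<tau> \<le> ereal (phi \<tau>)) \<longrightarrow>
        g \<sigma> = ereal (phi \<sigma>) \<longrightarrow> jet2_sphere phi Dphi Hphi \<sigma> \<in> G)"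

end

theory Submission
  imports Defs
begin

text \<open>
  If \<open>\<phi>\<close> touches \<open>g\<close> from above at \<open>\<sigma>\<close> on the sphere, its
  \<open>(2-p)\<close>-homogeneous extension \<open>|x|\<^sup>2\<^sup>-\<^sup>p \<phi>(x/|x|)\<close> touches \<open>u\<close> from above at \<open>\<sigma>\<close>, and its
  Hessian at \<open>\<sigma>\<close> is \<open>\<Phi>(J\<^sup>2\<^sub>\<sigma>\<phi>)\<close>; this transfers subharmonicity from \<open>u\<close> to \<open>g\<close>.

  Conversely, let \<open>\<psi>\<close> touch \<open>u\<close> from above at \<open>x \<noteq> 0\<close>. Since \<open>u\<close> is homogeneous and \<open>F\<close> is a
  cone, we may rescale so that \<open>x = \<sigma>\<close> lies on the sphere. Along the ray through \<open>\<sigma>\<close> the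
  function \<open>t\<^sup>p\<^sup>-\<^sup>2 \<psi>(t\<sigma>)\<close> has a minimum at \<open>t = 1\<close>, which gives the Euler identity
  \<open>\<sigma>\<cdot>D\<psi> = (2-p)\<psi>\<close> and a lower bound for \<open>\<sigma>\<cdot>D\<^sup>2\<psi> \<sigma>\<close>. Restricting \<open>\<psi>\<close> to the sphere does not
  control the mixed radial-tangential second derivatives, so for \<open>\<epsilon> > 0\<close> we test \<open>g\<close> instead with
  \<open>(1+\<tau>\<cdot>y)\<^sup>p\<^sup>-\<^sup>2 \<psi>((1+\<tau>\<cdot>y) y)\<close> for a tangent vector \<open>\<tau>\<close> chosen to complete a square: the
  resulting jet \<open>J\<close> satisfies \<open>\<Phi>(J) \<le> D\<^sup>2\<psi>(\<sigma>) + \<epsilon> P\<^sub>\<sigma>\<close>. As \<open>F\<close> is closed and stable under adding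
  positive semidefinite matrices, \<open>D\<^sup>2\<psi>(\<sigma>) \<in> F\<close>.

  The statement about harmonic functions follows by applying this to \<open>-u\<close>, \<open>-g\<close> and the dual
  subequation, which is again closed, monotone and a cone.
\<close>

lemma outer_mult_vec [simp]: "outer a b *v h = (b \<bullet> h) *\<^sub>R a"
  by (simp add: outer_def matrix_vector_mult_def vec_eq_iff inner_vec_def sum_distrib_left mult_ac)

lemma proj_perp_mult_vec [simp]: "proj_perp s *v h = h - (s \<bullet> h) *\<^sub>R s"
  by (simp add: proj_perp_def matrix_vector_mult_diff_rdistrib)

lemma proj_along_mult_vec [simp]: "proj_along s *v h = (s \<bullet> h) *\<^sub>R s"
  by (simp add: proj_along_def)

lemmas matrix_vector_mult_distribs [simp] =
  matrix_vector_mult_add_rdistrib matrix_vector_mult_diff_rdistrib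
  matrix_vector_right_distrib matrix_vector_mult_diff_distrib matrix_vector_mult_scaleR
  scaleR_matrix_vector_assoc[symmetric] matrix_vector_mul_assoc[symmetric]

lemma Sym2_iff_inner: "A \<in> Sym2 \<longleftrightarrow> (\<forall>x y. x \<bullet> (A *v y) = y \<bullet> (A *v (x::real^'n)))"
proof
  assume "A \<in> Sym2"
  then have "transpose A = A" by (simp add: Sym2_def)
  then show "\<forall>x y. x \<bullet> (A *v y) = y \<bullet> (A *v x)"
    by (metis dot_lmul_matrix inner_commute transpose_matrix_vector)
next
  assume sym: "\<forall>x y. x \<bullet> (A *v y) = y \<bullet> (A *v (x::real^'n))"
  have "x \<bullet> (transpose A *v y) = x \<bullet> (A *v y)" for x y
    using sym by (metis dot_lmul_matrix inner_commute transpose_matrix_vector)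
  then have "transpose A *v y = A *v y" for y
    by (metis inner_commute vector_eq_rdot)
  then show "A \<in> Sym2" by (simp add: Sym2_def matrix_eq)
qed

lemma Sym2_add: "A \<in> Sym2 \<Longrightarrow> B \<in> Sym2 \<Longrightarrow> A + B \<in> Sym2"
  by (simp add: Sym2_iff_inner inner_add_right)

lemma Sym2_diff: "A \<in> Sym2 \<Longrightarrow> B \<in> Sym2 \<Longrightarrow> A - B \<in> Sym2"
  by (simp add: Sym2_iff_inner inner_diff_right)

lemma Sym2_scaleR: "A \<in> Sym2 \<Longrightarrow> c *\<^sub>R A \<in> Sym2"
  by (simp add: Sym2_iff_inner)

lemma Sym2_uminus_iff [simp]: "- A \<in> Sym2 \<longleftrightarrow> A \<in> Sym2"
  using Sym2_scaleR[of A "-1"] Sym2_scaleR[of "- A" "-1"] by auto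

lemma closed_Sym2: "closed (Sym2 :: (real^'n^'n) set)"
proof -
  have "continuous_on UNIV (transpose :: real^'n^'n \<Rightarrow> real^'n^'n)"
    unfolding transpose_def by (intro continuous_intros)
  then show ?thesis
    unfolding Sym2_def by (intro closed_Collect_eq continuous_on_id)
qed

lemma dist_scaleR_scaleR: "dist (c *\<^sub>R x) (c *\<^sub>R y) = \<bar>c\<bar> * dist x (y::'a::real_normed_vector)"
  by (simp add: dist_norm flip: scaleR_right_diff_distrib)

section \<open>The dual subequation\<close>

lemma sym_interior_add_psd:
  assumes F: "\<And>A P. A \<in> F \<Longrightarrow> psd P \<Longrightarrow> A + P \<in> F"
    and B: "B \<in> sym_interior F" and P: "psd P"
  shows "B + P \<in> sym_interior F"
proof -
  obtain e where "B \<in> Sym2" "e > 0" and e: "\<And>C. C \<in> Sym2 \<Longrightarrow> dist C B < e \<Longrightarrow> C \<in> F"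
    using B by (auto simp: sym_interior_def)
  have "P \<in> Sym2" using P by (simp add: psd_def)
  have "C \<in> F" if "C \<in> Sym2" "dist C (B + P) < e" for C
  proof -
    have "dist (C - P) B = dist C (B + P)" by (simp add: dist_norm algebra_simps)
    then have "C - P \<in> F" using e Sym2_diff[OF _ \<open>P \<in> Sym2\<close>] that by auto
    from F[OF this P] show ?thesis by simp
  qed
  then show ?thesis
    using \<open>B \<in> Sym2\<close> \<open>P \<in> Sym2\<close> \<open>e > 0\<close> by (auto simp: sym_interior_def intro: Sym2_add)
qed

lemma sym_interior_scaleR:
  assumes F: "\<And>A t. A \<in> F \<Longrightarrow> t > 0 \<Longrightarrow> t *\<^sub>R A \<in> F"
    and B: "B \<in> sym_interior F" and t: "t > 0"
  shows "t *\<^sub>R B \<in> sym_interior F"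
proof -
  obtain e where "B \<in> Sym2" "e > 0" and e: "\<And>C. C \<in> Sym2 \<Longrightarrow> dist C B < e \<Longrightarrow> C \<in> F"
    using B by (auto simp: sym_interior_def)
  have "C \<in> F" if "C \<in> Sym2" "dist C (t *\<^sub>R B) < t * e" for C
  proof -
    have "dist ((1 / t) *\<^sub>R C) B = dist C (t *\<^sub>R B) / t"
      using dist_scaleR_scaleR[of "1 / t" C "t *\<^sub>R B"] t by simp
    also have "\<dots> < e" using that t by (simp add: field_simps)
    finally have "(1 / t) *\<^sub>R C \<in> F" using e Sym2_scaleR that(1) by blast
    from F[OF this, of t] t show ?thesis by simp
  qed
  moreover have "t * e > 0" using \<open>e > 0\<close> t by simp
  ultimately show ?thesis
    unfolding sym_interior_def using Sym2_scaleR[OF \<open>B \<in> Sym2\<close>] by blast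
qed

lemma dual_subeq_iff: "A \<in> dual_subeq F \<longleftrightarrow> A \<in> Sym2 \<and> - A \<notin> sym_interior F"
  by (force simp: dual_subeq_def image_iff)

lemma closed_dual_subeq: "closed (dual_subeq (F :: (real^'n^'n) set))"
proof -
  define U where "U = {A :: real^'n^'n. \<exists>e>0. \<forall>B\<in>Sym2. dist B (- A) < e \<longrightarrow> B \<in> F}"
  have "open U"
    unfolding open_dist
  proof
    fix A assume "A \<in> U"
    then obtain e where "e > 0" and e: "\<And>B. B \<in> Sym2 \<Longrightarrow> dist B (- A) < e \<Longrightarrow> B \<in> F"
      by (auto simp: U_def)
    have "A' \<in> U" if A': "dist A' A < e" for A'
    proof -
      have "B \<in> F" if "B \<in> Sym2" "dist B (- A') < e - dist A' A" for B
      proof (rule e[OF that(1)])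
        have "dist B (- A) \<le> dist B (- A') + dist (- A') (- A)" by (rule dist_triangle)
        then show "dist B (- A) < e" using that(2) by (simp add: dist_minus)
      qed
      moreover have "e - dist A' A > 0" using A' by simp
      ultimately show ?thesis unfolding U_def by blast
    qed
    then show "\<exists>e>0. \<forall>A'. dist A' A < e \<longrightarrow> A' \<in> U" using \<open>e > 0\<close> by blast
  qed
  moreover have "A \<in> dual_subeq F \<longleftrightarrow> A \<in> Sym2 - U" for A
    unfolding dual_subeq_iff sym_interior_def U_def by auto
  then have "dual_subeq F = Sym2 - U" by blast
  ultimately show ?thesis by (simp add: closed_Diff closed_Sym2)
qed

lemma dual_subeq_add_psd:
  assumes F: "\<And>A P. A \<in> F \<Longrightarrow> psd P \<Longrightarrow> A + P \<in> F"
    and A: "A \<in> dual_subeq F" and P: "psd P"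
  shows "A + P \<in> dual_subeq F"
proof -
  have "- (A + P) \<notin> sym_interior F"
    using sym_interior_add_psd[OF F _ P, of "- (A + P)"] A by (auto simp: dual_subeq_iff)
  then show ?thesis using A P by (simp add: dual_subeq_iff psd_def Sym2_add)
qed

lemma dual_subeq_scaleR:
  assumes F: "\<And>A t. A \<in> F \<Longrightarrow> t > 0 \<Longrightarrow> t *\<^sub>R A \<in> F"
    and A: "A \<in> dual_subeq F" and t: "t > 0"
  shows "t *\<^sub>R A \<in> dual_subeq F"
proof -
  have "- (t *\<^sub>R A) \<notin> sym_interior F"
    using sym_interior_scaleR[OF F _ positive_imp_inverse_positive[OF t], of "- (t *\<^sub>R A)"] A t
    by (auto simp: dual_subeq_iff)
  then show ?thesis using A by (simp add: dual_subeq_iff Sym2_scaleR)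
qed

definition closed_psd_monotone_cone :: "(real^'n^'n) set \<Rightarrow> bool" where
  "closed_psd_monotone_cone G \<longleftrightarrow> G \<subseteq> Sym2 \<and> closed G \<and>
     (\<forall>A\<in>G. \<forall>P. psd P \<longrightarrow> A + P \<in> G) \<and> (\<forall>A\<in>G. \<forall>t>0. t *\<^sub>R A \<in> G)"

lemma closed_psd_monotone_cone_if_cone_subequation:
  "cone_subequation F \<Longrightarrow> closed_psd_monotone_cone F"
  by (auto simp: cone_subequation_def closed_psd_monotone_cone_def)

lemma closed_psd_monotone_cone_dual_subeq:
  assumes "closed_psd_monotone_cone F"
  shows "closed_psd_monotone_cone (dual_subeq F)"
  using assms dual_subeq_add_psd[of F] dual_subeq_scaleR[of F] closed_dual_subeq[of F]
  by (auto simp: closed_psd_monotone_cone_def dual_subeq_def)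

section \<open>\<open>C\<^sup>2\<close> functions with explicit derivatives\<close>

text \<open>Unlike \<open>C2_near\<close>, \<open>C2_on\<close> allows an arbitrary domain and takes the second derivative as a
  linear map, so that the chain and product rules below compose directly.\<close>

definition C2_on :: "(real^'n) set \<Rightarrow> (real^'n \<Rightarrow> real) \<Rightarrow> (real^'n \<Rightarrow> real^'n)
   \<Rightarrow> (real^'n \<Rightarrow> real^'n \<Rightarrow> real^'n) \<Rightarrow> bool" where
  "C2_on S f Df D2f \<longleftrightarrow>
     (\<forall>y\<in>S. (f has_derivative (\<lambda>h. Df y \<bullet> h)) (at y) \<and> (Df has_derivative D2f y) (at y))
     \<and> continuous_on S (\<lambda>y. matrix (D2f y))"

lemma C2_on_has_derivative: "C2_on S f Df D2f \<Longrightarrow> y \<in> S \<Longrightarrow> (f has_derivative (\<lambda>h. Df y \<bullet> h)) (at y)"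
  unfolding C2_on_def by blast

lemma C2_on_has_derivative_second: "C2_on S f Df D2f \<Longrightarrow> y \<in> S \<Longrightarrow> (Df has_derivative D2f y) (at y)"
  unfolding C2_on_def by blast

lemma C2_on_matrix_mult_vec: "C2_on S f Df D2f \<Longrightarrow> y \<in> S \<Longrightarrow> matrix (D2f y) *v h = D2f y h"
  by (metis C2_on_has_derivative_second has_derivative_linear matrix_vector_mul(2))

lemma C2_on_continuous: "C2_on S f Df D2f \<Longrightarrow> continuous_on S f"
  by (meson C2_on_has_derivative continuous_at_imp_continuous_on has_derivative_continuous)

lemma C2_on_continuous_deriv: "C2_on S f Df D2f \<Longrightarrow> continuous_on S Df"
  by (meson C2_on_has_derivative_second continuous_at_imp_continuous_on has_derivative_continuous)

lemma continuous_on_matrix_vector_mult: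
  fixes A :: "_ \<Rightarrow> real^'n^'m"
  assumes "continuous_on S A" "continuous_on S v"
  shows "continuous_on S (\<lambda>y. A y *v v y)"
  unfolding matrix_vector_mult_def by (intro continuous_intros assms)

lemma continuous_on_second_deriv_compose:
  assumes "C2_on T f Df D2f" "continuous_on S G" "G ` S \<subseteq> T" "continuous_on S w"
  shows "continuous_on S (\<lambda>y. D2f (G y) (w y))"
proof -
  have "continuous_on T (\<lambda>y. matrix (D2f y))" using assms(1) unfolding C2_on_def by blast
  then have "continuous_on S (\<lambda>y. matrix (D2f (G y)))"
    using assms(2,3) by (rule continuous_on_compose2)
  then have "continuous_on S (\<lambda>y. matrix (D2f (G y)) *v w y)"
    using assms(4) by (rule continuous_on_matrix_vector_mult)
  moreover have "matrix (D2f (G y)) *v w y = D2f (G y) (w y)" if "y \<in> S" for y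
    using C2_on_matrix_mult_vec[OF assms(1)] assms(3) that by blast
  ultimately show ?thesis by (simp cong: continuous_on_cong)
qed

lemma continuous_on_second_deriv:
  "C2_on S f Df D2f \<Longrightarrow> continuous_on S w \<Longrightarrow> continuous_on S (\<lambda>y. D2f y (w y))"
  using continuous_on_second_deriv_compose[of S f Df D2f S "\<lambda>y. y"] by (simp add: continuous_on_id)

lemma C2_onI:
  assumes "\<And>y. y \<in> S \<Longrightarrow> (f has_derivative (\<lambda>h. Df y \<bullet> h)) (at y)"
    and "\<And>y. y \<in> S \<Longrightarrow> (Df has_derivative D2f y) (at y)"
    and "\<And>h. continuous_on S (\<lambda>y. D2f y h)"
  shows "C2_on S f Df D2f"
  unfolding C2_on_def matrix_def using assms by (auto intro!: continuous_intros)

lemma C2_on_subset: "C2_on S f Df D2f \<Longrightarrow> T \<subseteq> S \<Longrightarrow> C2_on T f Df D2f"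
  unfolding C2_on_def by (meson continuous_on_subset subsetD)

lemma C2_near_imp_C2_on: "C2_near f Df H x \<Longrightarrow> \<exists>e>0. C2_on (ball x e) f Df (\<lambda>y h. H y *v h)"
  by (auto simp: C2_near_def C2_on_def)

lemma C2_on_imp_C2_near:
  assumes f: "C2_on S f Df D2f" and "open S" "x \<in> S"
  shows "C2_near f Df (\<lambda>y. matrix (D2f y)) x"
proof -
  obtain e where "e > 0" "ball x e \<subseteq> S" using assms(2,3) by (meson openE)
  moreover have "(Df has_derivative (\<lambda>h. matrix (D2f y) *v h)) (at y)" if "y \<in> S" for y
    using C2_on_has_derivative_second[OF f that] C2_on_matrix_mult_vec[OF f that] by simp
  ultimately show ?thesis
    using f unfolding C2_near_def C2_on_def by (meson continuous_on_subset subsetD)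
qed

lemma C2_on_mult:
  assumes f: "C2_on S f Df D2f" and g: "C2_on S g Dg D2g"
  shows "C2_on S (\<lambda>y. f y * g y) (\<lambda>y. f y *\<^sub>R Dg y + g y *\<^sub>R Df y)
     (\<lambda>y h. (Df y \<bullet> h) *\<^sub>R Dg y + f y *\<^sub>R D2g y h + (Dg y \<bullet> h) *\<^sub>R Df y + g y *\<^sub>R D2f y h)"
proof (rule C2_onI)
  fix y assume y: "y \<in> S"
  show "((\<lambda>y. f y * g y) has_derivative (\<lambda>h. (f y *\<^sub>R Dg y + g y *\<^sub>R Df y) \<bullet> h)) (at y)"
    by (rule has_derivative_eq_rhs[OF
          has_derivative_mult[OF C2_on_has_derivative[OF f y] C2_on_has_derivative[OF g y]]])
      (auto simp: inner_add_left algebra_simps)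
  show "((\<lambda>y. f y *\<^sub>R Dg y + g y *\<^sub>R Df y) has_derivative
     (\<lambda>h. (Df y \<bullet> h) *\<^sub>R Dg y + f y *\<^sub>R D2g y h + (Dg y \<bullet> h) *\<^sub>R Df y + g y *\<^sub>R D2f y h)) (at y)"
    by (rule has_derivative_eq_rhs[OF has_derivative_add[OF
         has_derivative_scaleR[OF C2_on_has_derivative[OF f y] C2_on_has_derivative_second[OF g y]]
         has_derivative_scaleR[OF C2_on_has_derivative[OF g y] C2_on_has_derivative_second[OF f y]]]])
      (auto simp: algebra_simps)
next
  fix h
  show "continuous_on S (\<lambda>y. (Df y \<bullet> h) *\<^sub>R Dg y + f y *\<^sub>R D2g y h + (Dg y \<bullet> h) *\<^sub>R Df y + g y *\<^sub>R D2f y h)"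
    using C2_on_continuous[OF f] C2_on_continuous[OF g]
      C2_on_continuous_deriv[OF f] C2_on_continuous_deriv[OF g]
      continuous_on_second_deriv[OF f continuous_on_const] continuous_on_second_deriv[OF g continuous_on_const]
    by (intro continuous_intros) auto
qed

lemma C2_on_compose_real:
  assumes f: "C2_on S f Df D2f" and fT: "\<And>y. y \<in> S \<Longrightarrow> f y \<in> T"
    and d1: "\<And>x. x \<in> T \<Longrightarrow> (\<phi> has_real_derivative \<phi>1 x) (at x)"
    and d2: "\<And>x. x \<in> T \<Longrightarrow> (\<phi>1 has_real_derivative \<phi>2 x) (at x)"
    and c2: "continuous_on T \<phi>2"
  shows "C2_on S (\<lambda>y. \<phi> (f y)) (\<lambda>y. \<phi>1 (f y) *\<^sub>R Df y)
     (\<lambda>y h. (\<phi>2 (f y) * (Df y \<bullet> h)) *\<^sub>R Df y + \<phi>1 (f y) *\<^sub>R D2f y h)"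
proof -
  have "continuous_on T \<phi>1"
    using d2 by (meson DERIV_isCont continuous_at_imp_continuous_on)
  moreover have "continuous_on S f" by (rule C2_on_continuous[OF f])
  moreover have "f ` S \<subseteq> T" using fT by auto
  ultimately have "continuous_on S (\<lambda>y. \<phi>1 (f y))" "continuous_on S (\<lambda>y. \<phi>2 (f y))"
    using continuous_on_compose2 c2 by blast+
  show ?thesis
  proof (rule C2_onI)
    fix y assume y: "y \<in> S"
    have "(\<phi> has_derivative (*) (\<phi>1 (f y))) (at (f y))"
      using d1[OF fT[OF y]] by (simp add: has_field_derivative_def)
    from has_derivative_compose[OF C2_on_has_derivative[OF f y] this]
    show "((\<lambda>y. \<phi> (f y)) has_derivative (\<lambda>h. (\<phi>1 (f y) *\<^sub>R Df y) \<bullet> h)) (at y)"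
      by (rule has_derivative_eq_rhs) auto
    have "(\<phi>1 has_derivative (*) (\<phi>2 (f y))) (at (f y))"
      using d2[OF fT[OF y]] by (simp add: has_field_derivative_def)
    from has_derivative_scaleR[OF has_derivative_compose[OF C2_on_has_derivative[OF f y] this]
        C2_on_has_derivative_second[OF f y]]
    show "((\<lambda>y. \<phi>1 (f y) *\<^sub>R Df y) has_derivative
        (\<lambda>h. (\<phi>2 (f y) * (Df y \<bullet> h)) *\<^sub>R Df y + \<phi>1 (f y) *\<^sub>R D2f y h)) (at y)"
      by (rule has_derivative_eq_rhs) (auto simp: algebra_simps)
  next
    fix h
    show "continuous_on S (\<lambda>y. (\<phi>2 (f y) * (Df y \<bullet> h)) *\<^sub>R Df y + \<phi>1 (f y) *\<^sub>R D2f y h)"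
      using \<open>continuous_on S (\<lambda>y. \<phi>1 (f y))\<close> \<open>continuous_on S (\<lambda>y. \<phi>2 (f y))\<close>
        C2_on_continuous_deriv[OF f] continuous_on_second_deriv[OF f continuous_on_const]
      by (intro continuous_intros) auto
  qed
qed

lemma C2_on_inner_self: "C2_on S (\<lambda>y. y \<bullet> y) (\<lambda>y. 2 *\<^sub>R y) (\<lambda>y h. 2 *\<^sub>R h)"
proof (rule C2_onI)
  fix y :: "real^'n"
  show "((\<lambda>y. y \<bullet> y) has_derivative (\<lambda>h. (2 *\<^sub>R y) \<bullet> h)) (at y)"
    by (rule has_derivative_eq_rhs[OF has_derivative_inner[OF has_derivative_ident has_derivative_ident]])
      (auto simp: inner_commute)
  show "((\<lambda>y. 2 *\<^sub>R y) has_derivative (\<lambda>h. 2 *\<^sub>R h)) (at y)"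
    by (intro derivative_intros)
qed auto

lemma C2_on_affine: fixes \<tau> :: "real^'n" shows "C2_on S (\<lambda>y. c + \<tau> \<bullet> y) (\<lambda>y. \<tau>) (\<lambda>y h. 0)"
proof (rule C2_onI)
  fix y :: "real^'n"
  show "((\<lambda>y. c + \<tau> \<bullet> y) has_derivative (\<lambda>h. \<tau> \<bullet> h)) (at y)"
    by (rule has_derivative_eq_rhs[OF has_derivative_add[OF
          has_derivative_const has_derivative_inner_right[OF has_derivative_ident]]]) auto
qed auto

lemma C2_on_const: "C2_on S (\<lambda>y. c) (\<lambda>y. 0) (\<lambda>y h. 0)"
  by (rule C2_onI) (auto intro!: derivative_eq_intros)

lemma C2_on_compose_scaleR:
  assumes phi: "C2_on T \<phi> D\<phi> D2\<phi>" and b: "C2_on S b Db D2b" and ST: "\<And>y. y \<in> S \<Longrightarrow> b y *\<^sub>R y \<in> T"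
  shows "C2_on S (\<lambda>y. \<phi> (b y *\<^sub>R y)) (\<lambda>y. (y \<bullet> D\<phi> (b y *\<^sub>R y)) *\<^sub>R Db y + b y *\<^sub>R D\<phi> (b y *\<^sub>R y))
    (\<lambda>y h. (y \<bullet> D2\<phi> (b y *\<^sub>R y) (b y *\<^sub>R h + (Db y \<bullet> h) *\<^sub>R y) + h \<bullet> D\<phi> (b y *\<^sub>R y)) *\<^sub>R Db y
        + (y \<bullet> D\<phi> (b y *\<^sub>R y)) *\<^sub>R D2b y h
        + b y *\<^sub>R D2\<phi> (b y *\<^sub>R y) (b y *\<^sub>R h + (Db y \<bullet> h) *\<^sub>R y) + (Db y \<bullet> h) *\<^sub>R D\<phi> (b y *\<^sub>R y))"
proof (rule C2_onI)
  fix y assume y: "y \<in> S"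
  have dG: "((\<lambda>y. b y *\<^sub>R y) has_derivative (\<lambda>h. b y *\<^sub>R h + (Db y \<bullet> h) *\<^sub>R y)) (at y)"
    by (rule has_derivative_scaleR[OF C2_on_has_derivative[OF b y] has_derivative_ident])
  show "((\<lambda>y. \<phi> (b y *\<^sub>R y)) has_derivative
     (\<lambda>h. ((y \<bullet> D\<phi> (b y *\<^sub>R y)) *\<^sub>R Db y + b y *\<^sub>R D\<phi> (b y *\<^sub>R y)) \<bullet> h)) (at y)"
    by (rule has_derivative_eq_rhs[OF has_derivative_compose[OF dG C2_on_has_derivative[OF phi ST[OF y]]]])
      (auto simp: inner_add_left inner_add_right algebra_simps inner_commute)
  have dDG: "((\<lambda>y. D\<phi> (b y *\<^sub>R y)) has_derivative (\<lambda>h. D2\<phi> (b y *\<^sub>R y) (b y *\<^sub>R h + (Db y \<bullet> h) *\<^sub>R y))) (at y)"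
    by (rule has_derivative_compose[OF dG C2_on_has_derivative_second[OF phi ST[OF y]]])
  show "((\<lambda>y. (y \<bullet> D\<phi> (b y *\<^sub>R y)) *\<^sub>R Db y + b y *\<^sub>R D\<phi> (b y *\<^sub>R y)) has_derivative
     (\<lambda>h. (y \<bullet> D2\<phi> (b y *\<^sub>R y) (b y *\<^sub>R h + (Db y \<bullet> h) *\<^sub>R y) + h \<bullet> D\<phi> (b y *\<^sub>R y)) *\<^sub>R Db y
        + (y \<bullet> D\<phi> (b y *\<^sub>R y)) *\<^sub>R D2b y h
        + b y *\<^sub>R D2\<phi> (b y *\<^sub>R y) (b y *\<^sub>R h + (Db y \<bullet> h) *\<^sub>R y) + (Db y \<bullet> h) *\<^sub>R D\<phi> (b y *\<^sub>R y))) (at y)"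
    by (rule has_derivative_eq_rhs[OF has_derivative_add[OF
        has_derivative_scaleR[OF has_derivative_inner[OF has_derivative_ident dDG]
          C2_on_has_derivative_second[OF b y]]
        has_derivative_scaleR[OF C2_on_has_derivative[OF b y] dDG]]])
      (auto simp: algebra_simps)
next
  fix h
  have cb: "continuous_on S b" by (rule C2_on_continuous[OF b])
  have cG: "continuous_on S (\<lambda>y. b y *\<^sub>R y)" using cb by (intro continuous_intros)
  have img: "(\<lambda>y. b y *\<^sub>R y) ` S \<subseteq> T" using ST by auto
  have cD: "continuous_on S (\<lambda>y. D\<phi> (b y *\<^sub>R y))"
    by (rule continuous_on_compose2[OF C2_on_continuous_deriv[OF phi] cG img])
  have cL: "continuous_on S (\<lambda>y. D2\<phi> (b y *\<^sub>R y) (b y *\<^sub>R h + (Db y \<bullet> h) *\<^sub>R y))"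
    by (rule continuous_on_second_deriv_compose[OF phi cG img])
      (use cb C2_on_continuous_deriv[OF b] in \<open>intro continuous_intros\<close>)
  show "continuous_on S (\<lambda>y. (y \<bullet> D2\<phi> (b y *\<^sub>R y) (b y *\<^sub>R h + (Db y \<bullet> h) *\<^sub>R y) + h \<bullet> D\<phi> (b y *\<^sub>R y)) *\<^sub>R Db y
        + (y \<bullet> D\<phi> (b y *\<^sub>R y)) *\<^sub>R D2b y h
        + b y *\<^sub>R D2\<phi> (b y *\<^sub>R y) (b y *\<^sub>R h + (Db y \<bullet> h) *\<^sub>R y) + (Db y \<bullet> h) *\<^sub>R D\<phi> (b y *\<^sub>R y))"
    using cb cD cL C2_on_continuous_deriv[OF b] continuous_on_second_deriv[OF b continuous_on_const]
    by (intro continuous_intros) auto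
qed

lemma has_real_derivative_along_line:
  assumes "(f has_derivative (\<lambda>h. D \<bullet> h)) (at (a + t *\<^sub>R v))"
  shows "((\<lambda>t. f (a + t *\<^sub>R v)) has_real_derivative (D \<bullet> v)) (at t)"
proof -
  have l: "((\<lambda>t. a + t *\<^sub>R v) has_derivative (\<lambda>t. t *\<^sub>R v)) (at t)"
    by (auto intro!: derivative_eq_intros)
  show ?thesis unfolding has_field_derivative_def
    by (rule has_derivative_eq_rhs[OF has_derivative_compose[OF l assms]]) (auto simp: mult.commute)
qed

lemma has_real_derivative_along_line_second:
  assumes "(Df has_derivative L) (at (a + t *\<^sub>R v))"
  shows "((\<lambda>t. Df (a + t *\<^sub>R v) \<bullet> w) has_real_derivative (L v \<bullet> w)) (at t)"
proof -
  have l: "((\<lambda>t. a + t *\<^sub>R v) has_derivative (\<lambda>t. t *\<^sub>R v)) (at t)"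
    by (auto intro!: derivative_eq_intros)
  have lin: "linear L" using assms by (rule has_derivative_linear)
  show ?thesis unfolding has_field_derivative_def
    by (rule has_derivative_eq_rhs[OF has_derivative_inner_left[OF has_derivative_compose[OF l assms]]])
      (auto simp: linear_cmul[OF lin] mult.commute)
qed

lemma norm_scaleR_add_le:
  assumes "0 \<le> t" "t \<le> s" "0 \<le> r" "r \<le> s"
  shows "norm (t *\<^sub>R v + r *\<^sub>R w) \<le> s * (norm v + norm w)"
proof -
  have "norm (t *\<^sub>R v + r *\<^sub>R w) \<le> t * norm v + r * norm w"
    using assms by (metis abs_of_nonneg norm_scaleR norm_triangle_ineq)
  also have "\<dots> \<le> s * norm v + s * norm w" using assms by (intro add_mono mult_right_mono) auto
  finally show ?thesis by (simp add: algebra_simps)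
qed

lemma second_difference_mean_value:
  assumes C: "C2_on S f Df D2" and B: "ball x d \<subseteq> S" and s: "s > 0" "s * (norm v + norm w) < d"
  shows "\<exists>\<xi>. dist \<xi> x \<le> s * (norm v + norm w) \<and>
     f (x + s *\<^sub>R w + s *\<^sub>R v) - f (x + s *\<^sub>R v) - f (x + s *\<^sub>R w) + f x = s * s * (v \<bullet> D2 \<xi> w)"
proof -
  have inS: "x + t *\<^sub>R v + r *\<^sub>R w \<in> S" if "0 \<le> t" "t \<le> s" "0 \<le> r" "r \<le> s" for t r
  proof -
    have "norm (t *\<^sub>R v + r *\<^sub>R w) < d" using norm_scaleR_add_le[OF that, of v w] s(2) by linarith
    then have "dist (x + t *\<^sub>R v + r *\<^sub>R w) x < d" by (simp add: dist_norm add.assoc)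
    then show ?thesis using B by (auto simp: dist_commute)
  qed
  define h where "h t = f ((x + s *\<^sub>R w) + t *\<^sub>R v) - f (x + t *\<^sub>R v)" for t
  have dh: "(h has_real_derivative (Df ((x + s *\<^sub>R w) + t *\<^sub>R v) \<bullet> v - Df (x + t *\<^sub>R v) \<bullet> v)) (at t)"
    if "0 \<le> t" "t \<le> s" for t
  proof -
    have q: "x + t *\<^sub>R v + s *\<^sub>R w \<in> S" using s by (intro inS that) auto
    have "(x + s *\<^sub>R w) + t *\<^sub>R v = x + t *\<^sub>R v + s *\<^sub>R w" by (simp add: algebra_simps)
    then have p1: "(x + s *\<^sub>R w) + t *\<^sub>R v \<in> S" using q by metis
    have p2: "x + t *\<^sub>R v \<in> S" using inS[OF that order.refl] s by simp
    show ?thesis unfolding h_def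
      by (intro DERIV_diff has_real_derivative_along_line C2_on_has_derivative[OF C] p1
          p2[unfolded add_0_right])
  qed
  obtain t1 where t1: "0 < t1" "t1 < s" "h s - h 0 = (s - 0) *
      (Df ((x + s *\<^sub>R w) + t1 *\<^sub>R v) \<bullet> v - Df (x + t1 *\<^sub>R v) \<bullet> v)"
    using MVT2[OF s(1), of h, OF dh] by auto
  define k where "k r = Df ((x + t1 *\<^sub>R v) + r *\<^sub>R w) \<bullet> v" for r
  have dk: "(k has_real_derivative (D2 ((x + t1 *\<^sub>R v) + r *\<^sub>R w) w \<bullet> v)) (at r)"
    if "0 \<le> r" "r \<le> s" for r
  proof -
    have "(x + t1 *\<^sub>R v) + r *\<^sub>R w \<in> S" using inS[of t1 r] t1 that by auto
    then show ?thesis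
      unfolding k_def by (intro has_real_derivative_along_line_second C2_on_has_derivative_second[OF C])
  qed
  obtain r1 where r1: "0 < r1" "r1 < s" "k s - k 0 = (s - 0) * (D2 ((x + t1 *\<^sub>R v) + r1 *\<^sub>R w) w \<bullet> v)"
    using MVT2[OF s(1), of k, OF dk] by auto
  define \<xi> where "\<xi> = (x + t1 *\<^sub>R v) + r1 *\<^sub>R w"
  have dxi: "dist \<xi> x \<le> s * (norm v + norm w)"
    using norm_scaleR_add_le[of t1 s r1 v w] t1 r1 by (simp add: \<xi>_def dist_norm add.assoc)
  have "k s - k 0 = Df ((x + s *\<^sub>R w) + t1 *\<^sub>R v) \<bullet> v - Df (x + t1 *\<^sub>R v) \<bullet> v"
    unfolding k_def by (simp add: algebra_simps)
  then have "h s - h 0 = s * s * (v \<bullet> D2 \<xi> w)"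
    using t1(3) r1(3) by (simp add: \<xi>_def inner_commute)
  moreover have "h s - h 0 = f (x + s *\<^sub>R w + s *\<^sub>R v) - f (x + s *\<^sub>R v) - f (x + s *\<^sub>R w) + f x"
    by (simp add: h_def)
  ultimately show ?thesis using dxi by metis
qed

lemma second_deriv_nearly_symmetric:
  assumes C: "C2_on S f Df D2" and S: "open S" "x \<in> S" and "d > 0"
  shows "\<exists>\<xi>1 \<xi>2. \<xi>1 \<in> S \<and> \<xi>2 \<in> S \<and> dist \<xi>1 x < d \<and> dist \<xi>2 x < d \<and> v \<bullet> D2 \<xi>1 w = w \<bullet> D2 \<xi>2 v"
proof -
  obtain d0 where "d0 > 0" "ball x d0 \<subseteq> S" using S by (meson openE)
  define r where "r = min d d0"
  have "r > 0" and B: "ball x r \<subseteq> S" using \<open>d > 0\<close> \<open>d0 > 0\<close> \<open>ball x d0 \<subseteq> S\<close> by (auto simp: r_def)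
  define s where "s = r / (2 * (norm v + norm w + 1))"
  have np: "norm v + norm w + 1 > 0" by (simp add: add_nonneg_pos)
  have s: "s > 0" using \<open>r > 0\<close> np by (simp add: s_def)
  have "s * (norm v + norm w) \<le> s * (norm v + norm w + 1)" using s by simp
  also have "\<dots> = r / 2" using np by (simp add: s_def field_simps)
  finally have sr: "s * (norm v + norm w) < r" using \<open>r > 0\<close> by simp
  then have sr': "s * (norm w + norm v) < r" by (simp add: add.commute)
  obtain \<xi>1 where \<xi>1: "dist \<xi>1 x \<le> s * (norm v + norm w)"
    "f (x + s *\<^sub>R w + s *\<^sub>R v) - f (x + s *\<^sub>R v) - f (x + s *\<^sub>R w) + f x = s * s * (v \<bullet> D2 \<xi>1 w)"
    using second_difference_mean_value[OF C B s sr] by blast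
  obtain \<xi>2 where \<xi>2: "dist \<xi>2 x \<le> s * (norm w + norm v)"
    "f (x + s *\<^sub>R v + s *\<^sub>R w) - f (x + s *\<^sub>R w) - f (x + s *\<^sub>R v) + f x = s * s * (w \<bullet> D2 \<xi>2 v)"
    using second_difference_mean_value[OF C B s sr'] by blast
  have "x + s *\<^sub>R v + s *\<^sub>R w = x + s *\<^sub>R w + s *\<^sub>R v" by (simp add: algebra_simps)
  then have "s * s * (v \<bullet> D2 \<xi>1 w) = s * s * (w \<bullet> D2 \<xi>2 v)" using \<xi>1(2) \<xi>2(2) by (simp add: algebra_simps)
  then have "v \<bullet> D2 \<xi>1 w = w \<bullet> D2 \<xi>2 v" using s by simp
  moreover have "dist \<xi>1 x < r" "dist \<xi>2 x < r" using \<xi>1(1) \<xi>2(1) sr sr' by linarith+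
  moreover from this have "\<xi>1 \<in> S" "\<xi>2 \<in> S" using B by (auto simp: dist_commute)
  ultimately show ?thesis using r_def by force
qed

lemma C2_on_second_deriv_symmetric:
  assumes C: "C2_on S f Df D2" and S: "open S" "x \<in> S"
  shows "v \<bullet> D2 x w = w \<bullet> D2 x v"
proof (rule ccontr)
  define e where "e = \<bar>v \<bullet> D2 x w - w \<bullet> D2 x v\<bar> / 2"
  assume "v \<bullet> D2 x w \<noteq> w \<bullet> D2 x v"
  then have "e > 0" by (simp add: e_def)
  have "continuous_on S (\<lambda>y. v \<bullet> D2 y w)" "continuous_on S (\<lambda>y. w \<bullet> D2 y v)"
    using continuous_on_second_deriv[OF C continuous_on_const] by (auto intro: continuous_intros)
  then obtain d1 d2 where "d1 > 0" "d2 > 0"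
    and d1: "\<And>y. y \<in> S \<Longrightarrow> dist y x < d1 \<Longrightarrow> dist (v \<bullet> D2 y w) (v \<bullet> D2 x w) < e"
    and d2: "\<And>y. y \<in> S \<Longrightarrow> dist y x < d2 \<Longrightarrow> dist (w \<bullet> D2 y v) (w \<bullet> D2 x v) < e"
    using S(2) \<open>e > 0\<close> unfolding continuous_on_iff by metis
  obtain \<xi>1 \<xi>2 where \<xi>: "\<xi>1 \<in> S" "\<xi>2 \<in> S" "dist \<xi>1 x < min d1 d2" "dist \<xi>2 x < min d1 d2"
    and eq: "v \<bullet> D2 \<xi>1 w = w \<bullet> D2 \<xi>2 v"
    using second_deriv_nearly_symmetric[OF C S, of "min d1 d2" v w] \<open>d1 > 0\<close> \<open>d2 > 0\<close> by auto
  have "dist (v \<bullet> D2 \<xi>1 w) (v \<bullet> D2 x w) < e" "dist (w \<bullet> D2 \<xi>2 v) (w \<bullet> D2 x v) < e"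
    using d1 d2 \<xi> by auto
  then have "\<bar>v \<bullet> D2 x w - w \<bullet> D2 x v\<bar> < 2 * e" using eq by (simp add: dist_real_def)
  then show False by (simp add: e_def)
qed

lemma local_min_real_deriv:
  fixes f f' :: "real \<Rightarrow> real"
  assumes "\<delta> > 0" and df: "\<And>t. \<bar>t\<bar> < \<delta> \<Longrightarrow> (f has_real_derivative f' t) (at t)"
    and ddf: "(f' has_real_derivative f'') (at 0)" and min: "\<And>t. \<bar>t\<bar> < \<delta> \<Longrightarrow> f 0 \<le> f t"
  shows "f' 0 = 0 \<and> f'' \<ge> 0"
proof
  show "f' 0 = 0"
    by (rule DERIV_local_min[OF df[of 0] \<open>\<delta> > 0\<close>]) (use \<open>\<delta> > 0\<close> min in \<open>auto simp: dist_real_def\<close>)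
  show "f'' \<ge> 0"
  proof (rule ccontr)
    assume "\<not> f'' \<ge> 0"
    then obtain d where "d > 0" and d: "\<And>h. h > 0 \<Longrightarrow> h < d \<Longrightarrow> f' (0 + h) < f' 0"
      using DERIV_neg_dec_right[OF ddf] by force
    define h0 where "h0 = min d \<delta> / 2"
    have h0: "h0 > 0" "h0 < d" "h0 < \<delta>" using \<open>d > 0\<close> \<open>\<delta> > 0\<close> by (auto simp: h0_def)
    obtain z where z: "0 < z" "z < h0" "f h0 - f 0 = (h0 - 0) * f' z"
      using MVT2[OF h0(1), of f f'] df h0 by force
    have "f' z < 0" using d[of z] z h0 \<open>f' 0 = 0\<close> by simp
    then have "h0 * f' z < 0" using h0 by (simp add: mult_pos_neg)
    then have "f h0 < f 0" using z by simp
    moreover have "f 0 \<le> f h0" using min[of h0] h0 by simp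
    ultimately show False by simp
  qed
qed

lemma C2_on_min_along_line:
  assumes C: "C2_on S F DF D2F" and S: "open S" "x \<in> S" and "\<delta> > 0"
    and min: "\<And>t. \<bar>t\<bar> < \<delta> \<Longrightarrow> F x \<le> F (x + t *\<^sub>R v)"
  shows "DF x \<bullet> v = 0 \<and> D2F x v \<bullet> v \<ge> 0"
proof -
  obtain d0 where "d0 > 0" "ball x d0 \<subseteq> S" using S by (meson openE)
  define \<delta>' where "\<delta>' = min \<delta> (d0 / (norm v + 1))"
  have np: "norm v + 1 > 0" by (simp add: add_nonneg_pos)
  have "\<delta>' > 0" using \<open>\<delta> > 0\<close> \<open>d0 > 0\<close> np by (simp add: \<delta>'_def)
  have inS: "x + t *\<^sub>R v \<in> S" if "\<bar>t\<bar> < \<delta>'" for t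
  proof -
    have "\<bar>t\<bar> * norm v \<le> \<bar>t\<bar> * (norm v + 1)" by (simp add: mult_left_mono)
    also have "\<dots> < d0 / (norm v + 1) * (norm v + 1)"
      using that np by (intro mult_strict_right_mono) (auto simp: \<delta>'_def)
    also have "\<dots> = d0" using np by simp
    finally show ?thesis using \<open>ball x d0 \<subseteq> S\<close> by (auto simp: dist_norm)
  qed
  have "DF (x + 0 *\<^sub>R v) \<bullet> v = 0 \<and> D2F x v \<bullet> v \<ge> 0"
  proof (rule local_min_real_deriv[OF \<open>\<delta>' > 0\<close>, where f = "\<lambda>t. F (x + t *\<^sub>R v)"])
    show "((\<lambda>t. F (x + t *\<^sub>R v)) has_real_derivative DF (x + t *\<^sub>R v) \<bullet> v) (at t)" if "\<bar>t\<bar> < \<delta>'" for t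
      by (intro has_real_derivative_along_line C2_on_has_derivative[OF C] inS that)
    show "((\<lambda>t. DF (x + t *\<^sub>R v) \<bullet> v) has_real_derivative D2F x v \<bullet> v) (at 0)"
      using has_real_derivative_along_line_second[of DF "D2F x" x 0 v v]
        C2_on_has_derivative_second[OF C S(2)]
      by simp
    show "F (x + 0 *\<^sub>R v) \<le> F (x + t *\<^sub>R v)" if "\<bar>t\<bar> < \<delta>'" for t
      using min[of t] that by (simp add: \<delta>'_def)
  qed
  then show ?thesis by simp
qed

lemma C2_on_powr:
  assumes f: "C2_on S f Df D2f" and pos: "\<And>y. y \<in> S \<Longrightarrow> f y > 0"
  shows "C2_on S (\<lambda>y. f y powr r) (\<lambda>y. (r * f y powr (r - 1)) *\<^sub>R Df y)
     (\<lambda>y h. (r * (r - 1) * f y powr (r - 2) * (Df y \<bullet> h)) *\<^sub>R Df y + (r * f y powr (r - 1)) *\<^sub>R D2f y h)"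
proof (rule C2_on_compose_real[OF f, of "{0<..}"])
  show "\<And>y. y \<in> S \<Longrightarrow> f y \<in> {0<..}" using pos by auto
  fix x :: real assume x: "x \<in> {0<..}"
  show "((\<lambda>x. x powr r) has_real_derivative r * x powr (r - 1)) (at x)"
    using DERIV_fun_powr[OF DERIV_ident, of x r] x by simp
  show "((\<lambda>x. r * x powr (r - 1)) has_real_derivative r * (r - 1) * x powr (r - 2)) (at x)"
    using DERIV_cmult[OF DERIV_fun_powr[OF DERIV_ident, of x "r - 1"], of r] x
    by (simp add: mult.assoc)
next
  show "continuous_on {0<..} (\<lambda>x. r * (r - 1) * x powr (r - 2))"
    by (intro continuous_intros) auto
qed

lemma inner_self_powr: "(y \<bullet> y) powr (r / 2) = norm (y::real^'n) powr r"
  by (simp add: powr_powr norm_eq_sqrt_inner powr_half_sqrt[symmetric])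

lemma inner_self_powr_minus_half: "y \<noteq> 0 \<Longrightarrow> (y \<bullet> y) powr (-1/2) = 1 / norm (y::real^'n)"
  using inner_self_powr[of y "-1"] by (simp add: powr_minus_divide)

section \<open>The map \<open>\<Phi>\<close>\<close>

lemma Phi_mult_vec: "Phi p (\<sigma>, r, q, H) *v h = H *v h - ((p - 2) * r) *\<^sub>R (h - (\<sigma> \<bullet> h) *\<^sub>R \<sigma>)
   - (p - 1) *\<^sub>R ((q \<bullet> h) *\<^sub>R \<sigma> + (\<sigma> \<bullet> h) *\<^sub>R q) + ((p - 2) * (p - 1) * r) *\<^sub>R ((\<sigma> \<bullet> h) *\<^sub>R \<sigma>)"
  by (simp add: Phi_def)

lemma Sym2_Phi_iff: "Phi p (\<sigma>, r, q, H) \<in> Sym2 \<longleftrightarrow> H \<in> Sym2"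
proof -
  define K where "K = Phi p (\<sigma>, r, q, H) - H"
  have "K \<in> Sym2"
    by (simp add: K_def Sym2_iff_inner Phi_mult_vec inner_diff_right inner_add_right algebra_simps
        inner_commute)
  moreover have "Phi p (\<sigma>, r, q, H) = H + K" by (simp add: K_def)
  ultimately show ?thesis by (metis Sym2_add Sym2_diff add_diff_cancel)
qed

lemma jet2_sphere_in_F_sphere:
  assumes "norm \<sigma> = 1" and "G \<subseteq> Sym2" and "Phi p (jet2_sphere \<phi> D\<phi> H\<phi> \<sigma>) \<in> G"
  shows "jet2_sphere \<phi> D\<phi> H\<phi> \<sigma> \<in> F_sphere p G"
proof -
  have "proj_perp \<sigma> ** H\<phi> \<sigma> ** proj_perp \<sigma> - (\<sigma> \<bullet> D\<phi> \<sigma>) *\<^sub>R proj_perp \<sigma> \<in> Sym2"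
    using assms(2,3) Sym2_Phi_iff unfolding jet2_sphere_def by blast
  then show ?thesis
    using assms by (simp add: F_sphere_def J2_sphere_def jet2_sphere_def dot_square_norm
        inner_diff_left inner_diff_right inner_commute)
qed

section \<open>Hessians of the auxiliary test functions\<close>

text \<open>Powers of \<open>y \<bullet> y\<close> stand for powers of \<open>|y|\<close> (e.g.\ \<open>(y \<bullet> y) powr (-1/2) = 1 / |y|\<close>), so
  that the derivatives below come from the chain rule for the smooth map \<open>y \<mapsto> y \<bullet> y\<close>.\<close>

lemma C2_homogeneous_extension:
  assumes C: "C2_on T \<phi> D\<phi> (\<lambda>y h. H\<phi> y *v h)" and \<sigma>: "norm \<sigma> = 1"
    and S: "\<And>y. y \<in> S \<Longrightarrow> y \<noteq> 0 \<and> (1 / norm y) *\<^sub>R y \<in> T"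
  shows "\<exists>D D2. C2_on S (\<lambda>y. (y \<bullet> y) powr ((2 - p) / 2) * \<phi> ((y \<bullet> y) powr (-1/2) *\<^sub>R y)) D D2 \<and>
     (\<sigma> \<in> S \<longrightarrow> (\<forall>h. D2 \<sigma> h = Phi p (jet2_sphere \<phi> D\<phi> H\<phi> \<sigma>) *v h))"
proof -
  have pos: "\<And>y. y \<in> S \<Longrightarrow> y \<bullet> y > 0" using S by simp
  have "\<And>y. y \<in> S \<Longrightarrow> (y \<bullet> y) powr (-1/2) *\<^sub>R y \<in> T"
    using S by (metis inner_self_powr_minus_half)
  note C2 = C2_on_mult[OF C2_on_powr[OF C2_on_inner_self[of S] pos, where r = "(2 - p) / 2"]
      C2_on_compose_scaleR[OF C C2_on_powr[OF C2_on_inner_self[of S] pos, where r = "-1/2"] this]]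
  show ?thesis
    by (intro exI conjI impI allI, rule C2)
      (use \<sigma> inner_commute[of _ "D\<phi> \<sigma>"] in \<open>simp_all add: dot_square_norm jet2_sphere_def
        Phi_mult_vec inner_diff_left inner_diff_right inner_add_left inner_add_right vec_eq_iff
        algebra_simps field_simps\<close>)
qed

definition tilted_Hessian ::
  "real^'n^'n \<Rightarrow> real^'n \<Rightarrow> real^'n \<Rightarrow> real^'n \<Rightarrow> real \<Rightarrow> real \<Rightarrow> real^'n \<Rightarrow> real^'n" where
  "tilted_Hessian M \<sigma> \<tau> d r k h = M *v h + (\<tau> \<bullet> h) *\<^sub>R (M *v \<sigma>)
     + (\<sigma> \<bullet> (M *v h) + (\<tau> \<bullet> h) * (\<sigma> \<bullet> (M *v \<sigma>))) *\<^sub>R \<tau>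
     + (1 - k) *\<^sub>R ((\<tau> \<bullet> h) *\<^sub>R d + (d \<bullet> h) *\<^sub>R \<tau>) + (k * (1 - k) * r * (\<tau> \<bullet> h)) *\<^sub>R \<tau>"

lemma C2_tilted_rescaling:
  assumes C: "C2_on T \<psi> D\<psi> (\<lambda>y h. H\<psi> y *v h)" and \<sigma>: "norm \<sigma> = 1" and \<tau>: "\<tau> \<bullet> \<sigma> = 0"
    and S: "\<And>y. y \<in> S \<Longrightarrow> 1 + \<tau> \<bullet> y > 0 \<and> (1 + \<tau> \<bullet> y) *\<^sub>R y \<in> T"
    and euler: "\<sigma> \<bullet> D\<psi> \<sigma> = k * \<psi> \<sigma>"
  shows "\<exists>D D2. C2_on S (\<lambda>y. (1 + \<tau> \<bullet> y) powr (-k) * \<psi> ((1 + \<tau> \<bullet> y) *\<^sub>R y)) D D2 \<and>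
     (\<sigma> \<in> S \<longrightarrow> D \<sigma> = D\<psi> \<sigma> \<and>
        (\<forall>h. D2 \<sigma> h = tilted_Hessian (H\<psi> \<sigma>) \<sigma> \<tau> (D\<psi> \<sigma>) (\<psi> \<sigma>) k h))"
proof -
  have pos: "\<And>y. y \<in> S \<Longrightarrow> 1 + \<tau> \<bullet> y > 0" and ST: "\<And>y. y \<in> S \<Longrightarrow> (1 + \<tau> \<bullet> y) *\<^sub>R y \<in> T"
    using S by simp_all
  note C2 = C2_on_mult[OF C2_on_powr[OF C2_on_affine[of S 1 \<tau>] pos, where r = "-k"]
      C2_on_compose_scaleR[OF C C2_on_affine[of S 1 \<tau>] ST]]
  show ?thesis
    by (intro exI conjI impI allI, rule C2)
      (use \<sigma> \<tau> euler inner_commute[of \<sigma> \<tau>] inner_commute[of _ "D\<psi> \<sigma>"] in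
        \<open>simp_all add: tilted_Hessian_def dot_square_norm inner_diff_left inner_diff_right
          inner_add_left inner_add_right vec_eq_iff algebra_simps\<close>)
qed

lemma C2_radial_weight:
  assumes C: "C2_on T \<psi> D\<psi> (\<lambda>y h. H\<psi> y *v h)" and \<sigma>: "norm \<sigma> = 1"
    and S: "\<And>y. y \<in> S \<Longrightarrow> y \<noteq> 0 \<and> y \<in> T"
  shows "\<exists>D D2. C2_on S (\<lambda>y. (y \<bullet> y) powr (-k/2) * \<psi> y) D D2 \<and>
     (\<sigma> \<in> S \<longrightarrow> D \<sigma> \<bullet> \<sigma> = \<sigma> \<bullet> D\<psi> \<sigma> - k * \<psi> \<sigma> \<and>
        D2 \<sigma> \<sigma> \<bullet> \<sigma> = \<sigma> \<bullet> (H\<psi> \<sigma> *v \<sigma>) - 2 * k * (\<sigma> \<bullet> D\<psi> \<sigma>) + k * (k + 1) * \<psi> \<sigma>)"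
proof -
  have pos: "\<And>y. y \<in> S \<Longrightarrow> y \<bullet> y > 0" and ST: "S \<subseteq> T" using S by auto
  note C2 = C2_on_mult[OF C2_on_powr[OF C2_on_inner_self[of S] pos, where r = "-k/2"] C2_on_subset[OF C ST]]
  show ?thesis
    by (intro exI conjI impI allI, rule C2)
      (use \<sigma> inner_commute[of _ \<sigma>] in
        \<open>simp_all add: dot_square_norm inner_add_left algebra_simps field_simps\<close>)
qed

lemma C2_dilation:
  assumes C: "C2_on T \<psi> D\<psi> (\<lambda>y h. H\<psi> y *v h)" and S: "\<And>y. y \<in> S \<Longrightarrow> \<rho> *\<^sub>R y \<in> T"
  shows "\<exists>D D2. C2_on S (\<lambda>y. c * \<psi> (\<rho> *\<^sub>R y)) D D2 \<and>
    (\<forall>y\<in>S. \<forall>h. D2 y h = (c * \<rho> * \<rho>) *\<^sub>R (H\<psi> (\<rho> *\<^sub>R y) *v h))"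
  by (intro exI conjI ballI allI,
      rule C2_on_mult[OF C2_on_const[of S c] C2_on_compose_scaleR[OF C C2_on_const[of S \<rho>] S]]) simp_all

lemma radial_minimum_conditions:
  assumes C: "C2_on (ball \<sigma> e0) \<psi> D\<psi> (\<lambda>y h. H\<psi> y *v h)" and "e0 > 0" and \<sigma>: "norm \<sigma> = 1"
    and "\<delta> > 0" and min: "\<And>t. \<bar>t\<bar> < \<delta> \<Longrightarrow> \<psi> \<sigma> \<le> (1 + t) powr (-k) * \<psi> ((1 + t) *\<^sub>R \<sigma>)"
  shows "\<sigma> \<bullet> D\<psi> \<sigma> = k * \<psi> \<sigma> \<and> k * (k - 1) * \<psi> \<sigma> \<le> \<sigma> \<bullet> (H\<psi> \<sigma> *v \<sigma>)"
proof -
  define S where "S = ball \<sigma> (min e0 1)"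
  have "\<sigma> \<in> S" using \<open>e0 > 0\<close> by (simp add: S_def)
  moreover have "y \<noteq> 0 \<and> y \<in> ball \<sigma> e0" if "y \<in> S" for y
    using that \<sigma> by (auto simp: S_def dist_norm)
  ultimately obtain D D2 where C2: "C2_on S (\<lambda>y. (y \<bullet> y) powr (-k/2) * \<psi> y) D D2"
    and D: "D \<sigma> \<bullet> \<sigma> = \<sigma> \<bullet> D\<psi> \<sigma> - k * \<psi> \<sigma>"
    and D2: "D2 \<sigma> \<sigma> \<bullet> \<sigma> = \<sigma> \<bullet> (H\<psi> \<sigma> *v \<sigma>) - 2 * k * (\<sigma> \<bullet> D\<psi> \<sigma>) + k * (k + 1) * \<psi> \<sigma>"
    using C2_radial_weight[OF C \<sigma>, of S k] by blast
  have "(\<sigma> \<bullet> \<sigma>) powr (-k/2) * \<psi> \<sigma> \<le> ((\<sigma> + t *\<^sub>R \<sigma>) \<bullet> (\<sigma> + t *\<^sub>R \<sigma>)) powr (-k/2) * \<psi> (\<sigma> + t *\<^sub>R \<sigma>)"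
    if t: "\<bar>t\<bar> < min \<delta> 1" for t
  proof -
    have "\<sigma> + t *\<^sub>R \<sigma> = (1 + t) *\<^sub>R \<sigma>" by (simp add: algebra_simps)
    moreover have "((1 + t)\<^sup>2) powr (-k/2) = (1 + t) powr (-k/2) * (1 + t) powr (-k/2)"
      using t by (simp add: power2_eq_square powr_mult)
    moreover have "(1 + t) powr (-k/2) * (1 + t) powr (-k/2) = (1 + t) powr (-k)"
      by (simp flip: powr_add)
    ultimately show ?thesis using min[of t] t \<sigma> by (simp add: dot_square_norm)
  qed
  then have "D \<sigma> \<bullet> \<sigma> = 0 \<and> D2 \<sigma> \<sigma> \<bullet> \<sigma> \<ge> 0"
    by (intro C2_on_min_along_line[OF C2 _ \<open>\<sigma> \<in> S\<close>, of "min \<delta> 1"]) (use \<open>\<delta> > 0\<close> in \<open>auto simp: S_def\<close>)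
  then show ?thesis using D D2 by (auto simp: algebra_simps)
qed

lemma quadratic_form_Phi_tilted_jet:
  fixes M X :: "real^'n^'n" and \<sigma> \<tau> d v :: "real^'n" and r k p :: real
  defines "J \<equiv> (\<sigma>, r, proj_perp \<sigma> *v d, proj_perp \<sigma> ** X ** proj_perp \<sigma> - (\<sigma> \<bullet> d) *\<^sub>R proj_perp \<sigma>)"
    and "a \<equiv> \<sigma> \<bullet> (M *v \<sigma>) - k * (k - 1) * r"
    and "\<mu> \<equiv> \<sigma> \<bullet> (M *v v) - (\<sigma> \<bullet> v) * (\<sigma> \<bullet> (M *v \<sigma>)) + (1 - k) * (d \<bullet> v - (\<sigma> \<bullet> v) * (\<sigma> \<bullet> d))"
  assumes M: "M \<in> Sym2" and \<sigma>: "\<sigma> \<bullet> \<sigma> = 1" and \<tau>: "\<tau> \<bullet> \<sigma> = 0"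
    and euler: "\<sigma> \<bullet> d = k * r" and k: "k = 2 - p"
    and X: "\<And>h. X *v h = tilted_Hessian M \<sigma> \<tau> d r k h"
  shows "v \<bullet> (Phi p J *v v) = v \<bullet> (M *v v)
    - (a * (\<sigma> \<bullet> v)\<^sup>2 + 2 * (\<sigma> \<bullet> v) * \<mu> - 2 * (\<tau> \<bullet> v) * \<mu> - (\<tau> \<bullet> v)\<^sup>2 * a)"
proof -
  obtain dv tv sv sm mss mvv where
    a: "v \<bullet> d = dv" "d \<bullet> v = dv" "v \<bullet> \<tau> = tv" "\<tau> \<bullet> v = tv" "v \<bullet> \<sigma> = sv" "\<sigma> \<bullet> v = sv"
       "v \<bullet> (M *v \<sigma>) = sm" "\<sigma> \<bullet> (M *v v) = sm" "(M *v v) \<bullet> \<sigma> = sm" "(M *v \<sigma>) \<bullet> v = sm"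
       "\<sigma> \<bullet> (M *v \<sigma>) = mss" "(M *v \<sigma>) \<bullet> \<sigma> = mss" "v \<bullet> (M *v v) = mvv"
    using M by (metis Sym2_iff_inner inner_commute)
  have b: "\<sigma> \<bullet> \<tau> = 0" "d \<bullet> \<sigma> = k * r" using \<tau> euler by (simp_all add: inner_commute)
  show ?thesis
    unfolding J_def a_def \<mu>_def Phi_mult_vec matrix_vector_mul_assoc[symmetric]
      matrix_vector_mult_diff_rdistrib scaleR_matrix_vector_assoc[symmetric] proj_perp_mult_vec X
      tilted_Hessian_def
    by (simp add: inner_diff_left inner_diff_right inner_add_left inner_add_right a b \<sigma> \<tau> euler k)
      (simp add: algebra_simps power2_eq_square)
qed

lemma completed_square_nonneg:
  fixes a \<epsilon> \<alpha> \<mu> :: real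
  assumes a: "a \<ge> 0" and \<epsilon>: "\<epsilon> > 0"
  shows "0 \<le> \<epsilon> * \<alpha>\<^sup>2 + (a * \<alpha>\<^sup>2 + 2 * \<alpha> * \<mu> - 2 * (- \<mu> / (a + \<epsilon>)) * \<mu> - (- \<mu> / (a + \<epsilon>))\<^sup>2 * a)"
proof -
  obtain c where c_def: "c = a + \<epsilon>" by blast
  have c: "c > 0" using a \<epsilon> by (simp add: c_def)
  have a_eq: "a = c - \<epsilon>" by (simp add: c_def)
  have "(\<epsilon> * \<alpha>\<^sup>2 + (a * \<alpha>\<^sup>2 + 2 * \<alpha> * \<mu> - 2 * (- \<mu> / c) * \<mu> - (- \<mu> / c)\<^sup>2 * a)) * c\<^sup>2
      = (c * \<alpha> + \<mu>)\<^sup>2 * c + \<epsilon> * \<mu>\<^sup>2"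
    using c unfolding a_eq by (simp add: field_simps power2_eq_square)
  then have "\<epsilon> * \<alpha>\<^sup>2 + (a * \<alpha>\<^sup>2 + 2 * \<alpha> * \<mu> - 2 * (- \<mu> / c) * \<mu> - (- \<mu> / c)\<^sup>2 * a)
      = ((c * \<alpha> + \<mu>)\<^sup>2 * c + \<epsilon> * \<mu>\<^sup>2) / c\<^sup>2"
    using c by (simp add: field_simps)
  also have "\<dots> \<ge> 0" using c \<epsilon> by (intro divide_nonneg_pos add_nonneg_nonneg mult_nonneg_nonneg) auto
  finally show ?thesis by (simp add: c_def)
qed

lemma psd_sub_Phi_tilted_jet:
  fixes M X :: "real^'n^'n" and \<sigma> \<tau> d :: "real^'n" and r k p \<epsilon> :: real
  defines "J \<equiv> (\<sigma>, r, proj_perp \<sigma> *v d, proj_perp \<sigma> ** X ** proj_perp \<sigma> - (\<sigma> \<bullet> d) *\<^sub>R proj_perp \<sigma>)"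
    and "a \<equiv> \<sigma> \<bullet> (M *v \<sigma>) - k * (k - 1) * r"
  assumes M: "M \<in> Sym2" and \<sigma>: "\<sigma> \<bullet> \<sigma> = 1" and euler: "\<sigma> \<bullet> d = k * r" and k: "k = 2 - p"
    and a: "a \<ge> 0" and \<epsilon>: "\<epsilon> > 0"
    and \<tau>: "\<tau> = (- 1 / (a + \<epsilon>)) *\<^sub>R (proj_perp \<sigma> *v (M *v \<sigma>) + (1 - k) *\<^sub>R (proj_perp \<sigma> *v d))"
    and X: "\<And>h. X *v h = tilted_Hessian M \<sigma> \<tau> d r k h"
    and J: "Phi p J \<in> Sym2"
  shows "psd (M + \<epsilon> *\<^sub>R proj_along \<sigma> - Phi p J)"
proof -
  have \<tau>\<sigma>: "\<tau> \<bullet> \<sigma> = 0"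
    by (simp add: \<tau> inner_diff_left inner_add_left inner_diff_right inner_add_right \<sigma> inner_commute)
  have "proj_along \<sigma> \<in> Sym2" by (simp add: Sym2_iff_inner inner_commute)
  then have "M + \<epsilon> *\<^sub>R proj_along \<sigma> - Phi p J \<in> Sym2"
    using M J by (simp add: Sym2_add Sym2_diff Sym2_scaleR)
  moreover have "0 \<le> v \<bullet> ((M + \<epsilon> *\<^sub>R proj_along \<sigma> - Phi p J) *v v)" for v
  proof -
    define \<mu> where "\<mu> = \<sigma> \<bullet> (M *v v) - (\<sigma> \<bullet> v) * (\<sigma> \<bullet> (M *v \<sigma>)) + (1 - k) * (d \<bullet> v - (\<sigma> \<bullet> v) * (\<sigma> \<bullet> d))"
    have "(proj_perp \<sigma> *v (M *v \<sigma>) + (1 - k) *\<^sub>R (proj_perp \<sigma> *v d)) \<bullet> v = \<mu>"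
      using M[unfolded Sym2_iff_inner, rule_format, of v \<sigma>]
      by (simp add: \<mu>_def inner_diff_left inner_add_left inner_commute algebra_simps)
    then have "\<tau> \<bullet> v = - \<mu> / (a + \<epsilon>)" by (simp add: \<tau>)
    moreover have "v \<bullet> ((M + \<epsilon> *\<^sub>R proj_along \<sigma> - Phi p J) *v v)
        = \<epsilon> * (\<sigma> \<bullet> v)\<^sup>2 + (a * (\<sigma> \<bullet> v)\<^sup>2 + 2 * (\<sigma> \<bullet> v) * \<mu> - 2 * (\<tau> \<bullet> v) * \<mu> - (\<tau> \<bullet> v)\<^sup>2 * a)"
      using quadratic_form_Phi_tilted_jet[OF M \<sigma> \<tau>\<sigma> euler k X, of v]
      by (simp add: J_def a_def \<mu>_def inner_diff_right inner_add_right power2_eq_square inner_commute)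
    ultimately show ?thesis using completed_square_nonneg[OF a \<epsilon>] by simp
  qed
  ultimately show ?thesis by (simp add: psd_def)
qed

lemma ereal_mult_le_iff: "c > 0 \<Longrightarrow> ereal c * g \<le> ereal v \<longleftrightarrow> g \<le> ereal (v / c)"
  by (cases g) (auto simp: field_simps)

lemma ereal_mult_eq_iff: "c > 0 \<Longrightarrow> ereal c * g = ereal v \<longleftrightarrow> g = ereal (v / c)"
  by (cases g) (auto simp: field_simps)

lemma ereal_mult_less_iff: "c > 0 \<Longrightarrow> ereal c * g < ereal v \<longleftrightarrow> g < ereal (v / c)"
  by (cases g) (auto simp: field_simps)

lemma usc_on_subset: "usc_on S u \<Longrightarrow> T \<subseteq> S \<Longrightarrow> usc_on T u"
  unfolding usc_on_def by (meson subsetD)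

lemma usc_on_cong: "(\<And>x. x \<in> S \<Longrightarrow> u x = v x) \<Longrightarrow> usc_on S u \<longleftrightarrow> usc_on S v"
  unfolding usc_on_def by simp

lemma usc_on_mult_compose:
  assumes g: "usc_on T g" and s: "continuous_on S s" "s ` S \<subseteq> T"
    and c: "continuous_on S c" "\<And>x. x \<in> S \<Longrightarrow> c x > 0"
  shows "usc_on S (\<lambda>x. ereal (c x) * g (s x))"
  unfolding usc_on_def
proof (intro conjI ballI allI impI)
  fix x assume x: "x \<in> S"
  have "g (s x) \<noteq> \<infinity>" using g s(2) x unfolding usc_on_def by blast
  then show "ereal (c x) * g (s x) \<noteq> \<infinity>" using c(2)[OF x] by (cases "g (s x)") auto
  fix C assume "ereal (c x) * g (s x) < C"
  then obtain C1 where C1: "ereal (c x) * g (s x) < ereal C1" "ereal C1 < C"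
    using ereal_dense2 by blast
  then have "g (s x) < ereal (C1 / c x)" using ereal_mult_less_iff[OF c(2)[OF x]] by simp
  then obtain m where m: "g (s x) < ereal m" "ereal m < ereal (C1 / c x)" using ereal_dense2 by blast
  then have "c x * m < C1" using c(2)[OF x] by (simp add: field_simps)
  moreover have "continuous_on S (\<lambda>y. c y * m)" using c(1) by (intro continuous_intros)
  ultimately obtain e1 where "e1 > 0" and e1: "\<forall>y\<in>S. dist y x < e1 \<longrightarrow> dist (c y * m) (c x * m) < C1 - c x * m"
    using x unfolding continuous_on_iff by (meson diff_gt_0_iff_gt)
  have "s x \<in> T" using s(2) x by blast
  then obtain e2 where "e2 > 0" and e2: "\<forall>y\<in>T. dist y (s x) < e2 \<longrightarrow> g y < ereal m"
    using g m(1) unfolding usc_on_def by blast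
  obtain e3 where "e3 > 0" and e3: "\<forall>y\<in>S. dist y x < e3 \<longrightarrow> dist (s y) (s x) < e2"
    using s(1) x \<open>e2 > 0\<close> unfolding continuous_on_iff by blast
  have "ereal (c y) * g (s y) < C" if "y \<in> S" "dist y x < min e1 e3" for y
  proof -
    have "s y \<in> T" using s(2) that(1) by blast
    then have "g (s y) \<le> ereal m" using e2 e3 that by auto
    then have "ereal (c y) * g (s y) \<le> ereal (c y * m)"
      using ereal_mult_le_iff[OF c(2)[OF \<open>y \<in> S\<close>]] c(2)[OF \<open>y \<in> S\<close>] by simp
    also have "c y * m < C1" using e1 that by (auto simp: dist_real_def)
    then have "ereal (c y * m) < ereal C1" by simp
    finally show ?thesis using C1(2) by simp
  qed
  then show "\<exists>e>0. \<forall>y\<in>S. dist y x < e \<longrightarrow> ereal (c y) * g (s y) < C"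
    using \<open>e1 > 0\<close> \<open>e3 > 0\<close> by (intro exI[of _ "min e1 e3"]) auto
qed

section \<open>Homogeneous extensions\<close>

locale homogeneous_extension =
  fixes p :: real and g u :: "real^'n \<Rightarrow> ereal"
  assumes u_eq: "\<And>x. x \<noteq> 0 \<Longrightarrow> u x = ereal (1 / norm x powr (p - 2)) * g ((1 / norm x) *\<^sub>R x)"
begin

lemma u_eq_powr: "x \<noteq> 0 \<Longrightarrow> u x = ereal (norm x powr (2 - p)) * g ((1 / norm x) *\<^sub>R x)"
  using u_eq powr_minus_divide[of "norm x" "p - 2"] by simp

lemma u_scaleR_sphere:
  assumes "t > 0" and "norm \<tau> = 1"
  shows "u (t *\<^sub>R \<tau>) = ereal (t powr (2 - p)) * g \<tau>"
proof -
  have "\<tau> \<noteq> 0" using assms(2) by auto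
  then show ?thesis using u_eq_powr[of "t *\<^sub>R \<tau>"] assms by simp
qed

lemma u_sphere: "norm \<tau> = 1 \<Longrightarrow> u \<tau> = g \<tau>"
  using u_scaleR_sphere[of 1 \<tau>] by simp

lemma u_scaleR:
  assumes "\<rho> > 0" and "y \<noteq> 0"
  shows "u (\<rho> *\<^sub>R y) = ereal (\<rho> powr (2 - p)) * u y"
proof -
  have "\<rho> *\<^sub>R y = (\<rho> * norm y) *\<^sub>R ((1 / norm y) *\<^sub>R y)" using assms by simp
  then show ?thesis
    using u_scaleR_sphere[of "\<rho> * norm y" "(1 / norm y) *\<^sub>R y"] u_eq_powr[of y] assms
    by (simp add: powr_mult mult.assoc times_ereal.simps(1)[symmetric] del: times_ereal.simps(1))
qed

lemma u_le_dilated_iff: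
  assumes "\<rho> > 0" and "y \<noteq> 0"
  shows "u (\<rho> *\<^sub>R y) \<le> ereal v \<longleftrightarrow> u y \<le> ereal (\<rho> powr (p - 2) * v)"
  using u_scaleR[OF assms] ereal_mult_le_iff[of "\<rho> powr (2 - p)" "u y" v] assms(1)
  by (simp add: powr_minus_divide[of \<rho> "2 - p", simplified] field_simps)

lemma u_eq_dilated_iff:
  assumes "\<rho> > 0" and "y \<noteq> 0"
  shows "u (\<rho> *\<^sub>R y) = ereal v \<longleftrightarrow> u y = ereal (\<rho> powr (p - 2) * v)"
  using u_scaleR[OF assms] ereal_mult_eq_iff[of "\<rho> powr (2 - p)" "u y" v] assms(1)
  by (simp add: powr_minus_divide[of \<rho> "2 - p", simplified] field_simps)

lemma dilated_test:
  assumes "\<rho> > 0" and test: "\<exists>e>0. \<forall>y\<in>- {0}. dist y (\<rho> *\<^sub>R \<sigma>) < e \<longrightarrow> u y \<le> ereal (\<psi> y)"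
  shows "\<exists>e>0. \<forall>y\<in>- {0}. dist y \<sigma> < e \<longrightarrow> u y \<le> ereal (\<rho> powr (p - 2) * \<psi> (\<rho> *\<^sub>R y))"
proof -
  obtain e where "e > 0" and e: "\<forall>y\<in>- {0}. dist y (\<rho> *\<^sub>R \<sigma>) < e \<longrightarrow> u y \<le> ereal (\<psi> y)"
    using test by blast
  have "u y \<le> ereal (\<rho> powr (p - 2) * \<psi> (\<rho> *\<^sub>R y))" if "y \<in> - {0}" "dist y \<sigma> < e / \<rho>" for y
  proof -
    have "dist (\<rho> *\<^sub>R y) (\<rho> *\<^sub>R \<sigma>) < e"
      using that \<open>\<rho> > 0\<close> by (simp add: dist_scaleR_scaleR field_simps)
    then have "u (\<rho> *\<^sub>R y) \<le> ereal (\<psi> (\<rho> *\<^sub>R y))" using e that \<open>\<rho> > 0\<close> by simp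
    then show ?thesis using u_le_dilated_iff[OF \<open>\<rho> > 0\<close>, of y] that by simp
  qed
  then show ?thesis using \<open>e > 0\<close> \<open>\<rho> > 0\<close> by (intro exI[of _ "e / \<rho>"]) auto
qed

lemma usc_on_iff: "usc_on (- {0}) u \<longleftrightarrow> usc_on (sphere 0 1) g"
proof
  assume "usc_on (- {0}) u"
  then have "usc_on (sphere 0 1) u" by (rule usc_on_subset) auto
  then show "usc_on (sphere 0 1) g" using usc_on_cong[of "sphere 0 1" u g] u_sphere by simp
next
  assume "usc_on (sphere 0 1) g"
  then have "usc_on (- {0}) (\<lambda>x. ereal (norm x powr (2 - p)) * g ((1 / norm x) *\<^sub>R x))"
    by (rule usc_on_mult_compose) (auto intro!: continuous_intros split: if_splits)
  then show "usc_on (- {0}) u" using usc_on_cong[of "- {0}" u] u_eq_powr by simp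
qed

lemma homogeneous_extension_uminus: "homogeneous_extension p (\<lambda>x. - g x) (\<lambda>x. - u x)"
  by unfold_locales (simp add: u_eq)

lemma ambient_test_of_sphere_test:
  assumes \<sigma>: "norm \<sigma> = 1" and "e > 0"
    and \<phi>: "\<And>\<tau>. \<tau> \<in> sphere 0 1 \<Longrightarrow> dist \<tau> \<sigma> < e \<Longrightarrow> g \<tau> \<le> ereal (\<phi> \<tau>)"
  shows "\<exists>d>0. \<forall>y\<in>- {0}. dist y \<sigma> < d \<longrightarrow>
    u y \<le> ereal ((y \<bullet> y) powr ((2 - p) / 2) * \<phi> ((y \<bullet> y) powr (-1/2) *\<^sub>R y))"
proof -
  have "continuous_on (- {0}) (\<lambda>y::real^'n. (1 / norm y) *\<^sub>R y)" by (intro continuous_intros) auto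
  moreover have "\<sigma> \<in> - {0}" using \<sigma> by auto
  ultimately obtain d where "d > 0"
    and d: "\<forall>y\<in>- {0}. dist y \<sigma> < d \<longrightarrow> dist ((1 / norm y) *\<^sub>R y) ((1 / norm \<sigma>) *\<^sub>R \<sigma>) < e"
    using \<open>e > 0\<close> unfolding continuous_on_iff by blast
  have "u y \<le> ereal ((y \<bullet> y) powr ((2 - p) / 2) * \<phi> ((y \<bullet> y) powr (-1/2) *\<^sub>R y))"
    if y: "y \<in> - {0}" "dist y \<sigma> < d" for y
  proof -
    have "g ((1 / norm y) *\<^sub>R y) \<le> ereal (\<phi> ((1 / norm y) *\<^sub>R y))"
      using \<phi> d y \<sigma> by simp
    then have "u y \<le> ereal (norm y powr (2 - p) * \<phi> ((1 / norm y) *\<^sub>R y))"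
      using u_eq_powr[of y] ereal_mult_le_iff[of "norm y powr (2 - p)"] y by simp
    then show ?thesis using y inner_self_powr[of y "2 - p"] inner_self_powr_minus_half[of y] by simp
  qed
  then show ?thesis using \<open>d > 0\<close> by blast
qed

lemma sphere_le_of_ray_le:
  assumes "norm \<tau> = 1" and "b > 0" and "u (b *\<^sub>R \<tau>) \<le> ereal (\<psi> (b *\<^sub>R \<tau>))"
  shows "g \<tau> \<le> ereal (b powr - (2 - p) * \<psi> (b *\<^sub>R \<tau>))"
proof -
  have "g \<tau> \<le> ereal (\<psi> (b *\<^sub>R \<tau>) / b powr (2 - p))"
    using assms u_scaleR_sphere[OF assms(2,1)] ereal_mult_le_iff[of "b powr (2 - p)"] by simp
  then show ?thesis unfolding powr_minus_divide by simp
qed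

lemma sphere_test_of_ambient_test:
  assumes \<sigma>: "norm \<sigma> = 1" and \<tau>: "\<tau> \<bullet> \<sigma> = 0" and "e > 0"
    and \<psi>: "\<And>y. y \<noteq> 0 \<Longrightarrow> dist y \<sigma> < e \<Longrightarrow> u y \<le> ereal (\<psi> y)"
  shows "\<exists>d>0. \<forall>y\<in>sphere 0 1. dist y \<sigma> < d \<longrightarrow>
    g y \<le> ereal ((1 + \<tau> \<bullet> y) powr - (2 - p) * \<psi> ((1 + \<tau> \<bullet> y) *\<^sub>R y))"
proof -
  have \<tau>\<sigma>: "1 + \<tau> \<bullet> \<sigma> = 1" using \<tau> by (simp add: inner_commute)
  have "continuous_on UNIV (\<lambda>y::real^'n. (1 + \<tau> \<bullet> y) *\<^sub>R y)" by (intro continuous_intros)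
  then obtain d1 where "d1 > 0"
    and "\<forall>y\<in>UNIV. dist y \<sigma> < d1 \<longrightarrow> dist ((1 + \<tau> \<bullet> y) *\<^sub>R y) ((1 + \<tau> \<bullet> \<sigma>) *\<^sub>R \<sigma>) < e"
    using \<open>e > 0\<close> unfolding continuous_on_iff by blast
  then have d1: "\<And>y. dist y \<sigma> < d1 \<Longrightarrow> dist ((1 + \<tau> \<bullet> y) *\<^sub>R y) \<sigma> < e" using \<tau>\<sigma> by simp
  have "continuous_on UNIV (\<lambda>y::real^'n. 1 + \<tau> \<bullet> y)" by (intro continuous_intros)
  then obtain d2 where "d2 > 0" and "\<forall>y\<in>UNIV. dist y \<sigma> < d2 \<longrightarrow> dist (1 + \<tau> \<bullet> y) (1 + \<tau> \<bullet> \<sigma>) < 1"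
    unfolding continuous_on_iff by (meson UNIV_I zero_less_one)
  then have d2: "\<And>y. dist y \<sigma> < d2 \<Longrightarrow> dist (1 + \<tau> \<bullet> y) 1 < 1" using \<tau>\<sigma> by simp
  have "g y \<le> ereal ((1 + \<tau> \<bullet> y) powr - (2 - p) * \<psi> ((1 + \<tau> \<bullet> y) *\<^sub>R y))"
    if y: "y \<in> sphere 0 1" "dist y \<sigma> < min d1 d2" for y
  proof (rule sphere_le_of_ray_le)
    show "norm y = 1" "1 + \<tau> \<bullet> y > 0" using y d2[of y] by (auto simp: dist_real_def)
    then have "(1 + \<tau> \<bullet> y) *\<^sub>R y \<noteq> 0" by auto
    then show "u ((1 + \<tau> \<bullet> y) *\<^sub>R y) \<le> ereal (\<psi> ((1 + \<tau> \<bullet> y) *\<^sub>R y))"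
      using \<psi> d1 y by simp
  qed
  then show ?thesis using \<open>d1 > 0\<close> \<open>d2 > 0\<close> by (intro exI[of _ "min d1 d2"]) auto
qed

lemma radial_test:
  assumes \<sigma>: "norm \<sigma> = 1" and "e > 0"
    and \<psi>: "\<And>y. y \<noteq> 0 \<Longrightarrow> dist y \<sigma> < e \<Longrightarrow> u y \<le> ereal (\<psi> y)" and eq: "u \<sigma> = ereal (\<psi> \<sigma>)"
    and t: "\<bar>t\<bar> < min e 1"
  shows "\<psi> \<sigma> \<le> (1 + t) powr - (2 - p) * \<psi> ((1 + t) *\<^sub>R \<sigma>)"
proof -
  have "(1 + t) *\<^sub>R \<sigma> - \<sigma> = t *\<^sub>R \<sigma>" by (simp add: algebra_simps)
  then have "dist ((1 + t) *\<^sub>R \<sigma>) \<sigma> < e" using \<sigma> t by (simp add: dist_norm)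
  moreover have "(1 + t) *\<^sub>R \<sigma> \<noteq> 0" using \<sigma> t by auto
  ultimately have "g \<sigma> \<le> ereal ((1 + t) powr - (2 - p) * \<psi> ((1 + t) *\<^sub>R \<sigma>))"
    using \<psi> t by (intro sphere_le_of_ray_le[OF \<sigma>]) auto
  then show ?thesis using eq u_sphere[OF \<sigma>] by simp
qed

lemma sphere_subharmonic_if_F_subharmonic:
  assumes G: "G \<subseteq> Sym2" and U: "F_subharmonic G (- {0}) u"
  shows "sphere_subharmonic (F_sphere p G) g"
  unfolding sphere_subharmonic_def
proof (intro conjI ballI allI impI)
  show "usc_on (sphere 0 1) g" using U usc_on_iff by (simp add: F_subharmonic_def)
  fix \<sigma> \<phi> D\<phi> H\<phi>
  assume \<sigma>: "\<sigma> \<in> sphere 0 1" and C2: "C2_near \<phi> D\<phi> H\<phi> \<sigma>"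
    and test: "\<exists>e>0. \<forall>\<tau>\<in>sphere 0 1. dist \<tau> \<sigma> < e \<longrightarrow> g \<tau> \<le> ereal (\<phi> \<tau>)"
    and eq: "g \<sigma> = ereal (\<phi> \<sigma>)"
  have n\<sigma>: "norm \<sigma> = 1" using \<sigma> by simp
  obtain e0 where "e0 > 0" and C: "C2_on (ball \<sigma> e0) \<phi> D\<phi> (\<lambda>y h. H\<phi> y *v h)"
    using C2_near_imp_C2_on[OF C2] by blast
  define S where "S = - {0} \<inter> (\<lambda>y. (1 / norm y) *\<^sub>R y) -` ball \<sigma> e0"
  have "open S" unfolding S_def by (rule continuous_open_preimage) (auto intro!: continuous_intros)
  have "\<sigma> \<in> S" using n\<sigma> \<open>e0 > 0\<close> by (auto simp: S_def)
  define \<psi> where "\<psi> y = (y \<bullet> y) powr ((2 - p) / 2) * \<phi> ((y \<bullet> y) powr (-1/2) *\<^sub>R y)" for y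
  obtain D D2 where C2\<psi>: "C2_on S \<psi> D D2" and D2: "\<And>h. D2 \<sigma> h = Phi p (jet2_sphere \<phi> D\<phi> H\<phi> \<sigma>) *v h"
    using C2_homogeneous_extension[OF C n\<sigma>, of S p] \<open>\<sigma> \<in> S\<close> unfolding \<psi>_def S_def by auto
  have "matrix (D2 \<sigma>) \<in> G"
  proof (rule U[unfolded F_subharmonic_def, THEN conjunct2, rule_format])
    show "\<sigma> \<in> - {0}" using n\<sigma> by auto
    show "C2_near \<psi> D (\<lambda>y. matrix (D2 y)) \<sigma>" by (rule C2_on_imp_C2_near[OF C2\<psi> \<open>open S\<close> \<open>\<sigma> \<in> S\<close>])
    show "\<exists>e>0. \<forall>y\<in>- {0}. dist y \<sigma> < e \<longrightarrow> u y \<le> ereal (\<psi> y)"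
      unfolding \<psi>_def using test ambient_test_of_sphere_test[OF n\<sigma>] by blast
    show "u \<sigma> = ereal (\<psi> \<sigma>)" using u_sphere[OF n\<sigma>] eq n\<sigma> by (simp add: \<psi>_def dot_square_norm)
  qed
  moreover have "matrix (D2 \<sigma>) = Phi p (jet2_sphere \<phi> D\<phi> H\<phi> \<sigma>)"
    using C2_on_matrix_mult_vec[OF C2\<psi> \<open>\<sigma> \<in> S\<close>] D2 by (simp add: matrix_eq)
  ultimately show "jet2_sphere \<phi> D\<phi> H\<phi> \<sigma> \<in> F_sphere p G"
    using jet2_sphere_in_F_sphere[OF n\<sigma> G] by simp
qed

lemma tilted_jet_Phi_mem:
  assumes g: "sphere_subharmonic (F_sphere p G) g"
    and \<sigma>: "norm \<sigma> = 1" and C: "C2_on (ball \<sigma> e0) \<psi> D\<psi> (\<lambda>y h. H\<psi> y *v h)" and "e0 > 0"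
    and "e > 0" and \<psi>: "\<And>y. y \<noteq> 0 \<Longrightarrow> dist y \<sigma> < e \<Longrightarrow> u y \<le> ereal (\<psi> y)"
    and eq: "g \<sigma> = ereal (\<psi> \<sigma>)" and euler: "\<sigma> \<bullet> D\<psi> \<sigma> = (2 - p) * \<psi> \<sigma>" and \<tau>: "\<tau> \<bullet> \<sigma> = 0"
  obtains X where "\<And>h. X *v h = tilted_Hessian (H\<psi> \<sigma>) \<sigma> \<tau> (D\<psi> \<sigma>) (\<psi> \<sigma>) (2 - p) h"
    and "Phi p (\<sigma>, \<psi> \<sigma>, proj_perp \<sigma> *v D\<psi> \<sigma>,
      proj_perp \<sigma> ** X ** proj_perp \<sigma> - (\<sigma> \<bullet> D\<psi> \<sigma>) *\<^sub>R proj_perp \<sigma>) \<in> G"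
proof -
  define S where "S = {y. 0 < 1 + \<tau> \<bullet> y} \<inter> (\<lambda>y. (1 + \<tau> \<bullet> y) *\<^sub>R y) -` ball \<sigma> e0"
  have "open S" unfolding S_def
    by (rule continuous_open_preimage) (auto intro!: continuous_intros open_Collect_less)
  have "\<sigma> \<in> S" using \<open>e0 > 0\<close> \<tau> by (simp add: S_def inner_commute)
  define \<phi> where "\<phi> y = (1 + \<tau> \<bullet> y) powr - (2 - p) * \<psi> ((1 + \<tau> \<bullet> y) *\<^sub>R y)" for y
  obtain D D2 where C2\<phi>: "C2_on S \<phi> D D2" and D: "D \<sigma> = D\<psi> \<sigma>"
    and D2: "\<And>h. D2 \<sigma> h = tilted_Hessian (H\<psi> \<sigma>) \<sigma> \<tau> (D\<psi> \<sigma>) (\<psi> \<sigma>) (2 - p) h"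
    using C2_tilted_rescaling[OF C \<sigma> \<tau>, of S "2 - p"] euler \<open>\<sigma> \<in> S\<close>
    unfolding S_def \<phi>_def by auto
  have "\<phi> \<sigma> = \<psi> \<sigma>" using \<tau> by (simp add: \<phi>_def inner_commute)
  have "jet2_sphere \<phi> D (\<lambda>y. matrix (D2 y)) \<sigma> \<in> F_sphere p G"
  proof (rule g[unfolded sphere_subharmonic_def, THEN conjunct2, rule_format])
    show "\<sigma> \<in> sphere 0 1" using \<sigma> by simp
    show "C2_near \<phi> D (\<lambda>y. matrix (D2 y)) \<sigma>" by (rule C2_on_imp_C2_near[OF C2\<phi> \<open>open S\<close> \<open>\<sigma> \<in> S\<close>])
    show "\<exists>e>0. \<forall>\<tau>\<in>sphere 0 1. dist \<tau> \<sigma> < e \<longrightarrow> g \<tau> \<le> ereal (\<phi> \<tau>)"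
      using sphere_test_of_ambient_test[OF \<sigma> \<tau> \<open>e > 0\<close> \<psi>] by (simp add: \<phi>_def)
    show "g \<sigma> = ereal (\<phi> \<sigma>)" using eq \<open>\<phi> \<sigma> = \<psi> \<sigma>\<close> by simp
  qed
  then show ?thesis
    using that[of "matrix (D2 \<sigma>)"] C2_on_matrix_mult_vec[OF C2\<phi> \<open>\<sigma> \<in> S\<close>] D2 \<open>\<phi> \<sigma> = \<psi> \<sigma>\<close> D
    by (simp add: F_sphere_def jet2_sphere_def)
qed

lemma Hessian_add_proj_along_mem:
  assumes G: "closed_psd_monotone_cone G" and g: "sphere_subharmonic (F_sphere p G) g"
    and \<sigma>: "norm \<sigma> = 1" and C: "C2_on (ball \<sigma> e0) \<psi> D\<psi> (\<lambda>y h. H\<psi> y *v h)" and "e0 > 0"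
    and "e > 0" and \<psi>: "\<And>y. y \<noteq> 0 \<Longrightarrow> dist y \<sigma> < e \<Longrightarrow> u y \<le> ereal (\<psi> y)"
    and eq: "g \<sigma> = ereal (\<psi> \<sigma>)" and euler: "\<sigma> \<bullet> D\<psi> \<sigma> = (2 - p) * \<psi> \<sigma>"
    and radial: "(2 - p) * ((2 - p) - 1) * \<psi> \<sigma> \<le> \<sigma> \<bullet> (H\<psi> \<sigma> *v \<sigma>)" and "\<epsilon> > 0"
  shows "H\<psi> \<sigma> + \<epsilon> *\<^sub>R proj_along \<sigma> \<in> G"
proof -
  define k where "k = 2 - p"
  define a where "a = \<sigma> \<bullet> (H\<psi> \<sigma> *v \<sigma>) - k * (k - 1) * \<psi> \<sigma>"
  have "a \<ge> 0" using radial by (simp add: a_def k_def)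
  \<comment> \<open>The tilt \<open>\<tau>\<close> is chosen so that the mixed radial-tangential terms complete a square.\<close>
  define \<tau> where "\<tau> = (- 1 / (a + \<epsilon>)) *\<^sub>R
    (proj_perp \<sigma> *v (H\<psi> \<sigma> *v \<sigma>) + (1 - k) *\<^sub>R (proj_perp \<sigma> *v D\<psi> \<sigma>))"
  have \<sigma>\<sigma>: "\<sigma> \<bullet> \<sigma> = 1" using \<sigma> by (simp add: dot_square_norm)
  have "\<tau> \<bullet> \<sigma> = 0"
    by (simp add: \<tau>_def inner_diff_left inner_add_left inner_diff_right inner_add_right \<sigma>\<sigma> inner_commute)
  then obtain X where X: "\<And>h. X *v h = tilted_Hessian (H\<psi> \<sigma>) \<sigma> \<tau> (D\<psi> \<sigma>) (\<psi> \<sigma>) k h"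
    and J: "Phi p (\<sigma>, \<psi> \<sigma>, proj_perp \<sigma> *v D\<psi> \<sigma>,
      proj_perp \<sigma> ** X ** proj_perp \<sigma> - (\<sigma> \<bullet> D\<psi> \<sigma>) *\<^sub>R proj_perp \<sigma>) \<in> G"
    using tilted_jet_Phi_mem[OF g \<sigma> C \<open>e0 > 0\<close> \<open>e > 0\<close> \<psi> eq euler] unfolding k_def by blast
  have "H\<psi> \<sigma> \<in> Sym2"
    using C2_on_second_deriv_symmetric[OF C open_ball, of \<sigma>] \<open>e0 > 0\<close> by (simp add: Sym2_iff_inner)
  then have "psd (H\<psi> \<sigma> + \<epsilon> *\<^sub>R proj_along \<sigma> - Phi p (\<sigma>, \<psi> \<sigma>, proj_perp \<sigma> *v D\<psi> \<sigma>,
      proj_perp \<sigma> ** X ** proj_perp \<sigma> - (\<sigma> \<bullet> D\<psi> \<sigma>) *\<^sub>R proj_perp \<sigma>))"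
    using J G \<open>a \<ge> 0\<close> \<open>\<epsilon> > 0\<close> X euler
    by (intro psd_sub_Phi_tilted_jet[OF _ \<sigma>\<sigma>, where k = k and \<tau> = \<tau>])
      (auto simp: closed_psd_monotone_cone_def k_def a_def \<tau>_def)
  with J G show ?thesis by (fastforce simp: closed_psd_monotone_cone_def)
qed

lemma Hessian_mem_at_sphere:
  assumes G: "closed_psd_monotone_cone G" and g: "sphere_subharmonic (F_sphere p G) g"
    and \<sigma>: "norm \<sigma> = 1" and C2: "C2_near \<psi> D\<psi> H\<psi> \<sigma>"
    and test: "\<exists>e>0. \<forall>y\<in>- {0}. dist y \<sigma> < e \<longrightarrow> u y \<le> ereal (\<psi> y)"
    and eq: "u \<sigma> = ereal (\<psi> \<sigma>)"
  shows "H\<psi> \<sigma> \<in> G"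
proof -
  obtain e0 where "e0 > 0" and C: "C2_on (ball \<sigma> e0) \<psi> D\<psi> (\<lambda>y h. H\<psi> y *v h)"
    using C2_near_imp_C2_on[OF C2] by blast
  obtain e where "e > 0" and \<psi>: "\<And>y. y \<noteq> 0 \<Longrightarrow> dist y \<sigma> < e \<Longrightarrow> u y \<le> ereal (\<psi> y)"
    using test by blast
  have "\<sigma> \<bullet> D\<psi> \<sigma> = (2 - p) * \<psi> \<sigma> \<and> (2 - p) * ((2 - p) - 1) * \<psi> \<sigma> \<le> \<sigma> \<bullet> (H\<psi> \<sigma> *v \<sigma>)"
    using radial_test[OF \<sigma> \<open>e > 0\<close> \<psi> eq] \<open>e > 0\<close>
    by (intro radial_minimum_conditions[OF C \<open>e0 > 0\<close> \<sigma>, of "min e 1"]) auto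
  then have "H\<psi> \<sigma> + inverse (real (Suc j)) *\<^sub>R proj_along \<sigma> \<in> G" for j
    using eq u_sphere[OF \<sigma>]
    by (intro Hessian_add_proj_along_mem[OF G g \<sigma> C \<open>e0 > 0\<close> \<open>e > 0\<close> \<psi>]) auto
  moreover have "(\<lambda>j. H\<psi> \<sigma> + inverse (real (Suc j)) *\<^sub>R proj_along \<sigma>) \<longlonglongrightarrow> H\<psi> \<sigma> + 0 *\<^sub>R proj_along \<sigma>"
    by (intro tendsto_intros LIMSEQ_inverse_real_of_nat)
  ultimately show ?thesis
    using G closed_sequentially[of G] by (fastforce simp: closed_psd_monotone_cone_def)
qed

lemma F_subharmonic_if_sphere_subharmonic:
  assumes G: "closed_psd_monotone_cone G" and g: "sphere_subharmonic (F_sphere p G) g"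
  shows "F_subharmonic G (- {0}) u"
  unfolding F_subharmonic_def
proof (intro conjI ballI allI impI)
  show "usc_on (- {0}) u" using g usc_on_iff by (simp add: sphere_subharmonic_def)
  fix x \<psi> D\<psi> H\<psi>
  assume x: "x \<in> - {0}" and C2: "C2_near \<psi> D\<psi> H\<psi> x"
    and test: "\<exists>e>0. \<forall>y\<in>- {0}. dist y x < e \<longrightarrow> u y \<le> ereal (\<psi> y)"
    and eq: "u x = ereal (\<psi> x)"
  \<comment> \<open>Rescale the test function to the unit sphere: \<open>u\<close> is homogeneous and \<open>G\<close> is a cone.\<close>
  define \<rho> where "\<rho> = norm x"
  define \<sigma> where "\<sigma> = (1 / \<rho>) *\<^sub>R x"
  define c where "c = \<rho> powr (p - 2)"
  have "\<rho> > 0" using x by (simp add: \<rho>_def)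
  have \<sigma>: "norm \<sigma> = 1" and x\<sigma>: "\<rho> *\<^sub>R \<sigma> = x" and "\<sigma> \<noteq> 0"
    using \<open>\<rho> > 0\<close> by (auto simp: \<sigma>_def \<rho>_def)
  have "c > 0" using \<open>\<rho> > 0\<close> by (simp add: c_def)
  have dist_\<sigma>: "dist (\<rho> *\<^sub>R y) x = \<rho> * dist y \<sigma>" for y
    using dist_scaleR_scaleR[of \<rho> y \<sigma>] \<open>\<rho> > 0\<close> x\<sigma> by simp
  obtain e0 where "e0 > 0" and C: "C2_on (ball x e0) \<psi> D\<psi> (\<lambda>y h. H\<psi> y *v h)"
    using C2_near_imp_C2_on[OF C2] by blast
  define S where "S = ball \<sigma> (e0 / \<rho>)"
  have "\<sigma> \<in> S" using \<open>e0 > 0\<close> \<open>\<rho> > 0\<close> by (simp add: S_def)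
  have "\<rho> *\<^sub>R y \<in> ball x e0" if "y \<in> S" for y
  proof -
    have "dist y \<sigma> < e0 / \<rho>" using that by (simp add: S_def dist_commute)
    then have "dist (\<rho> *\<^sub>R y) x < e0" using \<open>\<rho> > 0\<close> by (simp add: dist_\<sigma> field_simps)
    then show ?thesis by (simp add: dist_commute)
  qed
  then obtain D D2 where C2': "C2_on S (\<lambda>y. c * \<psi> (\<rho> *\<^sub>R y)) D D2"
    and D2: "\<And>h. D2 \<sigma> h = (c * \<rho> * \<rho>) *\<^sub>R (H\<psi> x *v h)"
    using C2_dilation[OF C, of S \<rho> c] \<open>\<sigma> \<in> S\<close> x\<sigma> by force
  have "matrix (D2 \<sigma>) \<in> G"
  proof (rule Hessian_mem_at_sphere[OF G g \<sigma>])
    show "C2_near (\<lambda>y. c * \<psi> (\<rho> *\<^sub>R y)) D (\<lambda>y. matrix (D2 y)) \<sigma>"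
      by (rule C2_on_imp_C2_near[OF C2' _ \<open>\<sigma> \<in> S\<close>]) (simp add: S_def)
    show "\<exists>e>0. \<forall>y\<in>- {0}. dist y \<sigma> < e \<longrightarrow> u y \<le> ereal (c * \<psi> (\<rho> *\<^sub>R y))"
      using dilated_test[OF \<open>\<rho> > 0\<close>] test x\<sigma> by (simp add: c_def)
    show "u \<sigma> = ereal (c * \<psi> (\<rho> *\<^sub>R \<sigma>))"
      using eq x\<sigma> u_eq_dilated_iff[OF \<open>\<rho> > 0\<close> \<open>\<sigma> \<noteq> 0\<close>, of "\<psi> x"] by (simp add: c_def)
  qed
  moreover have "matrix (D2 \<sigma>) = (c * \<rho> * \<rho>) *\<^sub>R H\<psi> x"
    using C2_on_matrix_mult_vec[OF C2' \<open>\<sigma> \<in> S\<close>] D2 by (simp add: matrix_eq)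
  ultimately have "(c * \<rho> * \<rho>) *\<^sub>R H\<psi> x \<in> G" by simp
  moreover have "1 / (c * \<rho> * \<rho>) > 0" using \<open>c > 0\<close> \<open>\<rho> > 0\<close> by simp
  ultimately have "(1 / (c * \<rho> * \<rho>)) *\<^sub>R ((c * \<rho> * \<rho>) *\<^sub>R H\<psi> x) \<in> G"
    using G by (simp only: closed_psd_monotone_cone_def)
  then show "H\<psi> x \<in> G" using \<open>c > 0\<close> \<open>\<rho> > 0\<close> by simp
qed

lemma F_subharmonic_iff_sphere_subharmonic:
  assumes "closed_psd_monotone_cone G"
  shows "F_subharmonic G (- {0}) u \<longleftrightarrow> sphere_subharmonic (F_sphere p G) g"
  using assms sphere_subharmonic_if_F_subharmonic F_subharmonic_if_sphere_subharmonic
  by (auto simp: closed_psd_monotone_cone_def)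

end

theorem theorem5p5:
  fixes p :: real and F :: "(real^'n^'n) set"
    and g :: "real^'n \<Rightarrow> ereal" and u :: "real^'n \<Rightarrow> ereal"
  assumes "p \<noteq> 2"
    and "cone_subequation F"
    and "usc_on (sphere 0 1) g"
    and "usc_on (- {0}) u"
    and "\<And>x. x \<noteq> 0 \<Longrightarrow> u x = ereal (1 / norm x powr (p - 2)) * g ((1 / norm x) *\<^sub>R x)"
  shows "(F_subharmonic F (- {0}) u \<longleftrightarrow> sphere_subharmonic (F_sphere p F) g)
       \<and> (F_harmonic F (- {0}) u \<longleftrightarrow>
            sphere_subharmonic (F_sphere p F) g \<and>
            sphere_subharmonic (F_sphere p (dual_subeq F)) (\<lambda>x. - g x))"
proof -
  interpret homogeneous_extension p g u by unfold_locales (rule assms(5))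
  interpret neg: homogeneous_extension p "\<lambda>x. - g x" "\<lambda>x. - u x" by (rule homogeneous_extension_uminus)
  have F: "closed_psd_monotone_cone F"
    using assms(2) by (rule closed_psd_monotone_cone_if_cone_subequation)
  show ?thesis
    unfolding F_harmonic_def
    using F_subharmonic_iff_sphere_subharmonic[OF F]
      neg.F_subharmonic_iff_sphere_subharmonic[OF closed_psd_monotone_cone_dual_subeq[OF F]]
    by simp
qed

end
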